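(* Let $\mathcal N$ and $\mathcal M$ be quantum channels satisfying $s$-detailed balance with respect to $\rho_\beta$, with $\mathcal N$ having $\rho_\beta$ as unique fixed state and spectrum in $[0,1]$. Suppose the map $\widehat{\mathcal M}$ also satisfies $s$-detailed balance, and $\mathbb V_{\rho_\beta}(\mathcal M)>0$. Then for every integer $K\ge1$, $$t_{aut,K}\le \frac{\mathbf p}{\mathrm{gap}(\mathcal N)}+\frac12,\qquad \mathbf p:=\frac{\mathrm{Cov}_{\rho_\beta}(\mathcal M)}{\mathbb V_{\rho_\beta}(\mathcal M)}.$$
   Context: Let $H$ be a Hermitian operator on $n$ qubits, $\beta>0$, $\rho_\beta=e^{-\beta H}/\operatorname{tr}(e^{-\beta H})$. Quantum channels are CPTP maps $\mathcal T(X)=\sum_uK_uXK_u^\dagger$; $\mathcal T^\dagger$ denotes the Hilbert–Schmidt adjoint of a linear map (for a channel, $\mathcal T^\dagger(X)=\sum_uK_u^\dagger XK_u$). $\langle A,B\rangle_s=\operatorname{tr}(A^\dagger\rho_\beta^{1-s}B\rho_\beta^s)$; a linear map $\mathcal T$ satisfies $s$-detailed balance if $\langle A,\mathcal T^\dagger(B)\rangle_s=\langle\mathcal T^\dagger(A),B\rangle_s$ for all $A,B$. For a channel satisfying $s$-detailed balance, $\mathrm{gap}(\mathcal T)=1-\max_{X\ne0,\langle X,I\rangle_s=0}\langle X,\mathcal T^\dagger(X)\rangle_s/\langle X,X\rangle_s$. $\mathcal M$ has Kraus operators $\{O_u\}_u$ indexed by finitely many real outcomes $u$; $\mathbb E_\rho(\mathcal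 M)=\sum_uu\operatorname{tr}(O_u\rho O_u^\dagger)$, $\mathbb V_\rho(\mathcal M)=\sum_u|u-\mathbb E_\rho(\mathcal M)|^2\operatorname{tr}(O_u\rho O_u^\dagger)$, $\mathrm{Cov}_\rho(\mathcal M)=\sum_{x,y}(x-\mathbb E_\rho(\mathcal M))(y-\mathbb E_\rho(\mathcal M))\operatorname{tr}(O_yO_x\rho O_x^\dagger O_y^\dagger)$. Define $\widehat{\mathcal M}(X)=\sum_u(u-\mathbb E_{\rho_\beta}(\mathcal M))O_uXO_u^\dagger$, $\mathcal E=\mathcal M\circ\mathcal N\circ\mathcal M$, $\widehat{\mathcal E}=\mathcal M\circ\mathcal N\circ\widehat{\mathcal M}$, $\mathrm{Cor}_{\rho_\beta}(\mathcal E^t)=\operatorname{tr}(\widehat{\mathcal E}\circ\mathcal E^t\circ\widehat{\mathcal E}(\rho_\beta))$ for $t\ge0$, $C(t)=\mathrm{Cor}_{\rho_\beta}(\mathcal E^t)/\mathbb V_{\rho_\beta}(\mathcal M)$, and the finite-size integrated autocorrelation time $t_{aut,K}=\frac12+\sum_{t=1}^K(1-\frac tK)C(t-1)$. *)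

theory Defs
  imports "HOL-Analysis.Analysis"
begin

text \<open>Operators on the Hilbert space of n qubits are complex matrices indexed by a finite
  type 'd with CARD('d) = 2^n.\<close>

type_synonym 'd cmat = "complex^'d^'d"

definition cscale :: "complex \<Rightarrow> 'd::finite cmat \<Rightarrow> 'd cmat" where
  "cscale c A = (\<chi> i j. c * A $ i $ j)"

definition adj :: "'d::finite cmat \<Rightarrow> 'd cmat" where
  "adj A = (\<chi> i j. cnj (A $ j $ i))"

definition hermitian :: "'d::finite cmat \<Rightarrow> bool" where
  "hermitian A \<longleftrightarrow> adj A = A"

definition psd :: "'d::finite cmat \<Rightarrow> bool" where
  "psd A \<longleftrightarrow> (\<forall>v::complex^'d. let q = (\<Sum>i\<in>UNIV. \<Sum>j\<in>UNIV. cnj (v $ i) * A $ i $ j * v $ j)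
                                      in Im q = 0 \<and> Re q \<ge> 0)"

definition density :: "'d::finite cmat \<Rightarrow> bool" where
  "density A \<longleftrightarrow> hermitian A \<and> psd A \<and> trace A = 1"

definition mpow :: "'d::finite cmat \<Rightarrow> nat \<Rightarrow> 'd cmat" where
  "mpow A k = ((\<lambda>B. A ** B) ^^ k) (mat 1)"

definition mexp :: "'d::finite cmat \<Rightarrow> 'd cmat" where
  "mexp A = (\<Sum>k. (1 / fact k) *\<^sub>R mpow A k)"

definition partZ :: "real \<Rightarrow> 'd::finite cmat \<Rightarrow> real" where
  "partZ \<beta> H = Re (trace (mexp (- (\<beta> *\<^sub>R H))))"

definition gibbs :: "real \<Rightarrow> 'd::finite cmat \<Rightarrow> 'd cmat" where
  "gibbs \<beta> H = (1 / partZ \<beta> H) *\<^sub>R mexp (- (\<beta> *\<^sub>R H))"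

definition gibbs_pow :: "real \<Rightarrow> 'd::finite cmat \<Rightarrow> real \<Rightarrow> 'd cmat" where
  "gibbs_pow \<beta> H r = (1 / (partZ \<beta> H powr r)) *\<^sub>R mexp (- ((r * \<beta>) *\<^sub>R H))"

definition sip :: "real \<Rightarrow> 'd::finite cmat \<Rightarrow> real \<Rightarrow> 'd cmat \<Rightarrow> 'd cmat \<Rightarrow> complex" where
  "sip \<beta> H s A B = trace (adj A ** gibbs_pow \<beta> H (1 - s) ** B ** gibbs_pow \<beta> H s)"

definition wkraus :: "'a set \<Rightarrow> ('a \<Rightarrow> real) \<Rightarrow> ('a \<Rightarrow> 'd::finite cmat) \<Rightarrow> 'd cmat \<Rightarrow> 'd cmat" where
  "wkraus I w K X = (\<Sum>u\<in>I. w u *\<^sub>R (K u ** X ** adj (K u)))"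

definition wkraus_adj :: "'a set \<Rightarrow> ('a \<Rightarrow> real) \<Rightarrow> ('a \<Rightarrow> 'd::finite cmat) \<Rightarrow> 'd cmat \<Rightarrow> 'd cmat" where
  "wkraus_adj I w K X = (\<Sum>u\<in>I. w u *\<^sub>R (adj (K u) ** X ** K u))"

definition kraus :: "'a set \<Rightarrow> ('a \<Rightarrow> 'd::finite cmat) \<Rightarrow> 'd cmat \<Rightarrow> 'd cmat" where
  "kraus I K = wkraus I (\<lambda>_. 1) K"

definition kraus_adj :: "'a set \<Rightarrow> ('a \<Rightarrow> 'd::finite cmat) \<Rightarrow> 'd cmat \<Rightarrow> 'd cmat" where
  "kraus_adj I K = wkraus_adj I (\<lambda>_. 1) K"

definition is_channel :: "'a set \<Rightarrow> ('a \<Rightarrow> 'd::finite cmat) \<Rightarrow> bool" where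
  "is_channel I K \<longleftrightarrow> finite I \<and> (\<Sum>u\<in>I. adj (K u) ** K u) = mat 1"

text \<open>s-detailed balance of a map T given through its HS adjoint Tadj.\<close>
definition detailed_balance :: "real \<Rightarrow> 'd::finite cmat \<Rightarrow> real \<Rightarrow> ('d cmat \<Rightarrow> 'd cmat) \<Rightarrow> bool" where
  "detailed_balance \<beta> H s Tadj \<longleftrightarrow>
     (\<forall>A B. sip \<beta> H s A (Tadj B) = sip \<beta> H s (Tadj A) B)"

definition gap :: "real \<Rightarrow> 'd::finite cmat \<Rightarrow> real \<Rightarrow> ('d cmat \<Rightarrow> 'd cmat) \<Rightarrow> real" where
  "gap \<beta> H s Tadj = 1 - Sup {Re (sip \<beta> H s X (Tadj X) / sip \<beta> H s X X) | X.
                                X \<noteq> 0 \<and> sip \<beta> H s X (mat 1) = 0}"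

text \<open>Measurement statistics of the channel with outcomes u in U and Kraus operators Ob u.\<close>
definition Exp :: "real set \<Rightarrow> (real \<Rightarrow> 'd::finite cmat) \<Rightarrow> 'd cmat \<Rightarrow> real" where
  "Exp U Ob \<rho> = (\<Sum>u\<in>U. u * Re (trace (Ob u ** \<rho> ** adj (Ob u))))"

definition Var :: "real set \<Rightarrow> (real \<Rightarrow> 'd::finite cmat) \<Rightarrow> 'd cmat \<Rightarrow> real" where
  "Var U Ob \<rho> = (\<Sum>u\<in>U. \<bar>u - Exp U Ob \<rho>\<bar>\<^sup>2 * Re (trace (Ob u ** \<rho> ** adj (Ob u))))"

definition Cov :: "real set \<Rightarrow> (real \<Rightarrow> 'd::finite cmat) \<Rightarrow> 'd cmat \<Rightarrow> real" where
  "Cov U Ob \<rho> = (\<Sum>x\<in>U. \<Sum>y\<in>U. (x - Exp U Ob \<rho>) * (y - Exp U Ob \<rho>) *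
        Re (trace (Ob y ** Ob x ** \<rho> ** adj (Ob x) ** adj (Ob y))))"

definition Mhat :: "real \<Rightarrow> 'd::finite cmat \<Rightarrow> real set \<Rightarrow> (real \<Rightarrow> 'd cmat) \<Rightarrow> 'd cmat \<Rightarrow> 'd cmat" where
  "Mhat \<beta> H U Ob = wkraus U (\<lambda>u. u - Exp U Ob (gibbs \<beta> H)) Ob"

definition Mhat_adj :: "real \<Rightarrow> 'd::finite cmat \<Rightarrow> real set \<Rightarrow> (real \<Rightarrow> 'd cmat) \<Rightarrow> 'd cmat \<Rightarrow> 'd cmat" where
  "Mhat_adj \<beta> H U Ob = wkraus_adj U (\<lambda>u. u - Exp U Ob (gibbs \<beta> H)) Ob"

definition Cor :: "real \<Rightarrow> 'd::finite cmat \<Rightarrow> 'a set \<Rightarrow> ('a \<Rightarrow> 'd cmat) \<Rightarrow>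
                   real set \<Rightarrow> (real \<Rightarrow> 'd cmat) \<Rightarrow> nat \<Rightarrow> real" where
  "Cor \<beta> H I K U Ob t =
     (let Mc = kraus U Ob; Nc = kraus I K;
          E = Mc \<circ> Nc \<circ> Mc; Ehat = Mc \<circ> Nc \<circ> Mhat \<beta> H U Ob
      in Re (trace (Ehat ((E ^^ t) (Ehat (gibbs \<beta> H))))))"

definition t_aut :: "real \<Rightarrow> 'd::finite cmat \<Rightarrow> 'a set \<Rightarrow> ('a \<Rightarrow> 'd cmat) \<Rightarrow>
                   real set \<Rightarrow> (real \<Rightarrow> 'd cmat) \<Rightarrow> nat \<Rightarrow> real" where
  "t_aut \<beta> H I K U Ob Kn =
     1/2 + (\<Sum>t=1..Kn. (1 - real t / real Kn) *
              (Cor \<beta> H I K U Ob (t - 1) / Var U Ob (gibbs \<beta> H)))"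

end

(*
  Detailed balance makes the Heisenberg-picture maps N^dagger, M^dagger and Mhat^dagger self-adjoint for
  the KMS inner product <X, Y>_s.  With A = Mhat^dagger(I), which is orthogonal to I, one finds
  Cov = <A, A>_s and Cor(t) = <M^dagger (E^dagger)^t A, N^dagger A>_s, where E^dagger = M^dagger N^dagger M^dagger.
  On the orthogonal complement of I the self-adjoint map N^dagger has the spectrum of N, hence is
  positive, and its largest eigenvalue is 1 - gap(N) < 1: an eigenvalue 1 would yield a second fixed
  state of N near rho_beta.  So N^dagger shrinks the KMS norm there by the factor 1 - gap(N), while
  M^dagger never increases it by the Kadison-Schwarz inequality.  Cauchy-Schwarz then gives
  Cor(t) <= (1 - gap(N))^(t+1) Cov, and a geometric series bounds t_aut,K.
*)

theory Submission
  imports Defs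
begin

section \<open>Matrix algebra\<close>

lemma adj_nth [simp]: "adj A $ i $ j = cnj (A $ j $ i)"
  by (simp add: adj_def)

lemma adj_adj [simp]: "adj (adj A) = A"
  by (simp add: vec_eq_iff)

lemma adj_mult: "adj (A ** B) = adj B ** adj A"
  by (simp add: vec_eq_iff matrix_matrix_mult_def mult.commute)

lemma adj_add: "adj (A + B) = adj A + adj B"
  by (simp add: vec_eq_iff)

lemma adj_diff: "adj (A - B) = adj A - adj B"
  by (simp add: vec_eq_iff)

lemma adj_uminus: "adj (- A) = - adj A"
  by (simp add: vec_eq_iff)

lemma adj_0 [simp]: "adj 0 = 0"
  by (simp add: vec_eq_iff)

lemma adj_scaleR: "adj (r *\<^sub>R A) = r *\<^sub>R adj A"
  by (simp add: vec_eq_iff)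

lemma adj_mat_1 [simp]: "adj (mat 1) = mat 1"
  by (simp add: vec_eq_iff mat_def)

lemma adj_sum: "adj (sum f S) = (\<Sum>x\<in>S. adj (f x))"
  by (simp add: vec_eq_iff)

lemma cscale_nth [simp]: "cscale c A $ i $ j = c * A $ i $ j"
  by (simp add: cscale_def)

lemma adj_cscale: "adj (cscale c A) = cscale (cnj c) (adj A)"
  by (simp add: vec_eq_iff)

lemma cscale_of_real: "cscale (of_real r) A = r *\<^sub>R A"
  by (simp only: vec_eq_iff vector_scaleR_component cscale_nth) (simp add: scaleR_conv_of_real)

lemma cscale_sum: "cscale c (sum f S) = (\<Sum>x\<in>S. cscale c (f x))"
  by (simp add: vec_eq_iff sum_distrib_left)

lemma cscale_scaleR: "cscale c (r *\<^sub>R A) = r *\<^sub>R cscale c A"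
  by (simp add: vec_eq_iff)

lemma cscale_eq_0_iff: "cscale c A = 0 \<longleftrightarrow> c = 0 \<or> A = 0"
  by (auto simp: vec_eq_iff)

lemma trace_adj: "trace (adj A) = cnj (trace A)"
  by (simp add: trace_def)

lemma trace_scaleR: "trace (r *\<^sub>R A) = of_real r * trace (A :: 'a::real_algebra_1^'n^'n)"
  unfolding trace_def by (simp add: sum_distrib_left) (simp add: scaleR_conv_of_real)

lemma trace_cscale: "trace (cscale c A) = c * trace A"
  by (simp add: trace_def sum_distrib_left)

lemma trace_sum: "trace (sum f S) = (\<Sum>x\<in>S. trace (f x))"
  by (simp add: trace_def sum.swap[of _ UNIV])

lemma matrix_mult_scaleR_left: "(r *\<^sub>R A) ** B = r *\<^sub>R (A ** B :: 'a::real_algebra_1^'n^'m)"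
  by (simp add: vec_eq_iff matrix_matrix_mult_def scaleR_sum_right)

lemma matrix_mult_scaleR_right: "A ** (r *\<^sub>R B) = r *\<^sub>R (A ** B :: 'a::real_algebra_1^'n^'m)"
  by (simp add: vec_eq_iff matrix_matrix_mult_def scaleR_sum_right)

lemma matrix_mult_cscale_left: "cscale c A ** B = cscale c (A ** B)"
  by (simp add: vec_eq_iff matrix_matrix_mult_def sum_distrib_left mult.assoc)

lemma matrix_mult_cscale_right: "A ** cscale c B = cscale c (A ** B)"
  by (simp add: vec_eq_iff matrix_matrix_mult_def sum_distrib_left mult.left_commute)

lemma matrix_mult_sum_left: "sum f S ** (B :: 'a::comm_semiring_1^'n^'m) = (\<Sum>x\<in>S. f x ** B)"
  by (simp add: vec_eq_iff matrix_matrix_mult_def sum_distrib_right sum.swap[of _ S])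

lemma matrix_mult_sum_right: "(B :: 'a::comm_semiring_1^'n^'m) ** sum f S = (\<Sum>x\<in>S. B ** f x)"
  by (simp add: vec_eq_iff matrix_matrix_mult_def sum_distrib_left sum.swap[of _ S])

lemma matrix_add_rdistrib: "(A + B) ** (C :: 'a::semiring_1^'n^'m) = A ** C + B ** C"
  by (simp add: vec_eq_iff matrix_matrix_mult_def sum.distrib distrib_right)

lemma matrix_diff_rdistrib: "(A - B) ** (C :: 'a::ring_1^'n^'m) = A ** C - B ** C"
  by (simp add: vec_eq_iff matrix_matrix_mult_def sum_subtractf left_diff_distrib)

lemma matrix_diff_ldistrib: "C ** (A - B) = C ** A - C ** (B :: 'a::ring_1^'n^'m)"
  by (simp add: vec_eq_iff matrix_matrix_mult_def sum_subtractf right_diff_distrib)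

lemma mat_1_neq_0: "mat 1 \<noteq> (0 :: 'a::zero_neq_one^'n^'n)"
  by (simp add: vec_eq_iff mat_def)

lemma trace_adj_mult_self: "trace (adj A ** A) = of_real (\<Sum>i\<in>UNIV. \<Sum>j\<in>UNIV. (cmod (A $ j $ i))\<^sup>2)"
  unfolding trace_def matrix_matrix_mult_def of_real_sum
  by (intro sum.cong refl) (simp add: complex_norm_square mult.commute del: of_real_power)

lemma Im_trace_adj_mult_self [simp]: "Im (trace (adj A ** A)) = 0"
  by (simp add: trace_adj_mult_self)

lemma Re_trace_adj_mult_self_nonneg: "0 \<le> Re (trace (adj A ** A))"
  by (simp add: trace_adj_mult_self sum_nonneg)

lemma Re_trace_adj_mult_self_pos:
  assumes "A \<noteq> 0"
  shows "0 < Re (trace (adj A ** A))"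
proof -
  obtain i j where "A $ j $ i \<noteq> 0"
    using assms by (auto simp: vec_eq_iff)
  then have "0 < (cmod (A $ j $ i))\<^sup>2"
    by simp
  also have "\<dots> \<le> (\<Sum>j\<in>UNIV. (cmod (A $ j $ i))\<^sup>2)"
    by (rule member_le_sum) auto
  also have "\<dots> \<le> (\<Sum>i\<in>UNIV. \<Sum>j\<in>UNIV. (cmod (A $ j $ i))\<^sup>2)"
    by (rule member_le_sum[where f = "\<lambda>i. \<Sum>j\<in>UNIV. (cmod (A $ j $ i))\<^sup>2"]) (auto intro: sum_nonneg)
  finally show ?thesis
    by (simp add: trace_adj_mult_self)
qed

lemma matrix_eq_0_if_trace_adj_mult_eq_0:
  assumes "\<And>A. trace (adj A ** D) = 0"
  shows "D = 0"
  using Re_trace_adj_mult_self_pos[of D] assms[of D] by (cases "D = 0") auto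


section \<open>The matrix exponential\<close>

lemma mpow_0 [simp]: "mpow A 0 = mat 1"
  by (simp add: mpow_def)

lemma mpow_Suc: "mpow A (Suc k) = A ** mpow A k"
  by (simp add: mpow_def)

lemma mpow_add: "mpow A (k + m) = mpow A k ** mpow A m"
  by (induction k) (simp_all add: mpow_Suc matrix_mul_assoc)

lemma mpow_scaleR: "mpow (c *\<^sub>R A) k = (c ^ k) *\<^sub>R mpow A k"
  by (induction k) (simp_all add: mpow_Suc matrix_mult_scaleR_left matrix_mult_scaleR_right)

lemma adj_mpow: "adj (mpow A k) = mpow (adj A) k"
proof (induction k)
  case (Suc k)
  have "mpow (adj A) k ** adj A = mpow (adj A) (k + 1)"
    by (simp only: mpow_add) (simp add: mpow_Suc)
  then show ?case
    using Suc by (simp add: mpow_Suc adj_mult)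
qed simp

definition entry_norm_sum :: "'d::finite cmat \<Rightarrow> real" where
  "entry_norm_sum A = (\<Sum>i\<in>UNIV. \<Sum>j\<in>UNIV. cmod (A $ i $ j))"

lemma entry_norm_sum_nonneg: "0 \<le> entry_norm_sum A"
  by (simp add: entry_norm_sum_def sum_nonneg)

lemma row_norm_sum_le_entry_norm_sum: "(\<Sum>l\<in>UNIV. cmod (A $ i $ l)) \<le> entry_norm_sum A"
  unfolding entry_norm_sum_def
  by (rule member_le_sum[where f = "\<lambda>i. \<Sum>l\<in>UNIV. cmod (A $ i $ l)"]) (auto intro: sum_nonneg)

lemma norm_mpow_entry_le: "cmod (mpow A k $ i $ j) \<le> entry_norm_sum A ^ k"
proof (induction k arbitrary: i j)
  case 0
  then show ?case
    by (simp add: mat_def)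
next
  case (Suc k)
  have "cmod (mpow A (Suc k) $ i $ j) = cmod (\<Sum>l\<in>UNIV. A $ i $ l * mpow A k $ l $ j)"
    by (simp add: mpow_Suc matrix_matrix_mult_def)
  also have "\<dots> \<le> (\<Sum>l\<in>UNIV. cmod (A $ i $ l) * cmod (mpow A k $ l $ j))"
    by (rule order_trans[OF norm_sum]) (simp add: norm_mult)
  also have "\<dots> \<le> (\<Sum>l\<in>UNIV. cmod (A $ i $ l) * entry_norm_sum A ^ k)"
    by (intro sum_mono mult_left_mono Suc) auto
  also have "\<dots> \<le> entry_norm_sum A * entry_norm_sum A ^ k"
    by (simp add: sum_distrib_right[symmetric] mult_right_mono row_norm_sum_le_entry_norm_sum
        entry_norm_sum_nonneg)
  finally show ?case
    by simp
qed

lemma norm_le_entry_norm_sum: "norm M \<le> entry_norm_sum M"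
proof -
  have "norm M \<le> (\<Sum>i\<in>UNIV. norm (M $ i))"
    unfolding norm_vec_def by (rule L2_set_le_sum) simp
  also have "\<dots> \<le> (\<Sum>i\<in>UNIV. \<Sum>j\<in>UNIV. cmod (M $ i $ j))"
    by (intro sum_mono) (unfold norm_vec_def, rule L2_set_le_sum, simp)
  finally show ?thesis
    by (simp add: entry_norm_sum_def)
qed

lemma mexp_sums: "(\<lambda>k. (1 / fact k) *\<^sub>R mpow (A :: 'd::finite cmat) k) sums mexp A"
proof -
  let ?C = "real CARD('d) * real CARD('d)"
  have "norm (mpow A k) \<le> ?C * entry_norm_sum A ^ k" for k
  proof -
    have "entry_norm_sum (mpow A k) \<le> (\<Sum>i\<in>(UNIV::'d set). \<Sum>j\<in>(UNIV::'d set). entry_norm_sum A ^ k)"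
      unfolding entry_norm_sum_def[of "mpow A k"] by (intro sum_mono norm_mpow_entry_le)
    then show ?thesis
      using norm_le_entry_norm_sum[of "mpow A k"] by simp
  qed
  then have "norm (norm ((1 / fact k) *\<^sub>R mpow A k)) \<le> ?C * (inverse (fact k) * entry_norm_sum A ^ k)"
    for k
    by (simp add: divide_simps mult.commute)
  then have "summable (\<lambda>k. norm ((1 / fact k) *\<^sub>R mpow A k))"
    by (intro summable_comparison_test[OF _ summable_mult[OF summable_exp]]) blast
  then have "summable (\<lambda>k. (1 / fact k) *\<^sub>R mpow A k)"
    by (rule summable_norm_cancel)
  then show ?thesis
    unfolding mexp_def by (rule summable_sums)
qed

lemma mexp_entry_sums: "(\<lambda>k. of_real (1 / fact k) * mpow A k $ i $ j) sums (mexp A $ i $ j)"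
proof -
  have "(\<lambda>k. ((1 / fact k) *\<^sub>R mpow A k) $ i $ j) sums (mexp A $ i $ j)"
    by (intro sums_vec_nth mexp_sums)
  then show ?thesis
    by (simp only: vector_scaleR_component) (simp only: scaleR_conv_of_real)
qed

lemma mexp_adj: "adj (mexp A) = mexp (adj A)"
proof -
  have "adj (mexp A) $ i $ j = mexp (adj A) $ i $ j" for i j
  proof -
    have "(\<lambda>k. cnj (of_real (1 / fact k) * mpow A k $ j $ i)) sums cnj (mexp A $ j $ i)"
      using mexp_entry_sums[of A j i] by (simp only: sums_cnj)
    moreover have "(\<lambda>k. cnj (of_real (1 / fact k) * mpow A k $ j $ i)) =
        (\<lambda>k. of_real (1 / fact k) * mpow (adj A) k $ i $ j)"
      by (simp flip: adj_mpow)
    ultimately show ?thesis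
      using mexp_entry_sums[of "adj A" i j] sums_unique2 by fastforce
  qed
  then show ?thesis
    by (simp add: vec_eq_iff)
qed

lemma mexp_0: "mexp (0 :: 'd::finite cmat) = mat 1"
proof -
  have "mpow 0 k = (0 :: 'd cmat)" if "k > 0" for k
    using that by (cases k) (simp_all add: mpow_Suc)
  then have "(\<lambda>k. (1 / fact k) *\<^sub>R mpow 0 k) = (\<lambda>k. if k = 0 then mat 1 else (0 :: 'd cmat))"
    by auto
  moreover have "(\<lambda>k. if k = 0 then mat 1 else (0 :: 'd cmat)) sums mat 1"
    using sums_single[of 0 "\<lambda>_. mat 1 :: 'd cmat"] by simp
  ultimately show ?thesis
    using mexp_sums[of "0 :: 'd cmat"] sums_unique2 by metis
qed

lemma mexp_scaleR_entry_sums: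
  "(\<lambda>k. of_real (r ^ k / fact k) * mpow X k $ i $ j) sums (mexp (r *\<^sub>R X) $ i $ j)"
  using mexp_entry_sums[of "r *\<^sub>R X" i j]
  by (simp only: mpow_scaleR vector_scaleR_component) (simp add: scaleR_conv_of_real field_simps)

lemma summable_norm_mexp_scaleR_entry:
  "summable (\<lambda>k. norm (of_real (r ^ k / fact k) * mpow X k $ i $ j :: complex))"
proof (rule summable_comparison_test[OF _ summable_exp[of "\<bar>r\<bar> * entry_norm_sum X"]], intro exI allI impI)
  fix k :: nat
  have "norm (norm (of_real (r ^ k / fact k) * mpow X k $ i $ j :: complex)) =
      \<bar>r\<bar> ^ k / fact k * cmod (mpow X k $ i $ j)"
    by (simp add: norm_mult norm_divide norm_power)
  also have "\<dots> \<le> \<bar>r\<bar> ^ k / fact k * entry_norm_sum X ^ k"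
    by (intro mult_left_mono norm_mpow_entry_le) auto
  finally show "norm (norm (of_real (r ^ k / fact k) * mpow X k $ i $ j :: complex)) \<le>
      inverse (fact k) * (\<bar>r\<bar> * entry_norm_sum X) ^ k"
    by (simp add: field_simps power_mult_distrib)
qed

lemma sum_mpow_entry_binomial:
  "(\<Sum>l\<in>UNIV. \<Sum>k\<le>n. of_real (a ^ k / fact k) * mpow X k $ i $ l *
      (of_real (b ^ (n - k) / fact (n - k)) * mpow X (n - k) $ l $ j)) =
    of_real ((a + b) ^ n / fact n) * mpow X n $ i $ j"
proof -
  have "(\<Sum>l\<in>UNIV. \<Sum>k\<le>n. of_real (a ^ k / fact k) * mpow X k $ i $ l *
        (of_real (b ^ (n - k) / fact (n - k)) * mpow X (n - k) $ l $ j)) =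
      (\<Sum>k\<le>n. of_real (a ^ k / fact k * (b ^ (n - k) / fact (n - k))) *
        (mpow X k ** mpow X (n - k)) $ i $ j)"
    by (subst sum.swap) (simp add: matrix_matrix_mult_def sum_distrib_left mult_ac)
  also have "\<dots> = of_real (\<Sum>k\<le>n. a ^ k / fact k * (b ^ (n - k) / fact (n - k))) * mpow X n $ i $ j"
    by (simp add: sum_distrib_right flip: mpow_add)
  also have "(\<Sum>k\<le>n. a ^ k / fact k * (b ^ (n - k) / fact (n - k))) = (a + b) ^ n / fact n"
    using exp_series_add_commuting[of a b n] by (simp add: divide_inverse mult_ac)
  finally show ?thesis .
qed

lemma mexp_scaleR_add: "mexp (a *\<^sub>R X) ** mexp (b *\<^sub>R X) = mexp ((a + b) *\<^sub>R X)"
proof -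
  have "(mexp (a *\<^sub>R X) ** mexp (b *\<^sub>R X)) $ i $ j = mexp ((a + b) *\<^sub>R X) $ i $ j" for i j
  proof -
    have "(\<lambda>n. \<Sum>l\<in>UNIV. \<Sum>k\<le>n. of_real (a ^ k / fact k) * mpow X k $ i $ l *
          (of_real (b ^ (n - k) / fact (n - k)) * mpow X (n - k) $ l $ j)) sums
        (\<Sum>l\<in>UNIV. mexp (a *\<^sub>R X) $ i $ l * mexp (b *\<^sub>R X) $ l $ j)"
    proof (rule sums_sum)
      fix l
      show "(\<lambda>n. \<Sum>k\<le>n. of_real (a ^ k / fact k) * mpow X k $ i $ l *
          (of_real (b ^ (n - k) / fact (n - k)) * mpow X (n - k) $ l $ j)) sums
        (mexp (a *\<^sub>R X) $ i $ l * mexp (b *\<^sub>R X) $ l $ j)"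
        unfolding sums_unique[OF mexp_scaleR_entry_sums[of a X i l]]
          sums_unique[OF mexp_scaleR_entry_sums[of b X l j]]
        by (rule Cauchy_product_sums[OF summable_norm_mexp_scaleR_entry summable_norm_mexp_scaleR_entry])
    qed
    then have "(\<lambda>n. of_real ((a + b) ^ n / fact n) * mpow X n $ i $ j) sums
        (mexp (a *\<^sub>R X) ** mexp (b *\<^sub>R X)) $ i $ j"
      by (simp only: sum_mpow_entry_binomial matrix_matrix_mult_def vec_lambda_beta)
    then show ?thesis
      using mexp_scaleR_entry_sums[of "a + b" X i j] by (rule sums_unique2)
  qed
  then show ?thesis
    by (simp add: vec_eq_iff)
qed


section \<open>Powers of the Gibbs state\<close>

locale hermitian_hamiltonian =
  fixes \<beta> :: real and H :: "'d::finite cmat"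
  assumes hermitian_H: "hermitian H"
begin

definition boltzmann :: "real \<Rightarrow> 'd cmat" where
  "boltzmann r = mexp (- ((r * \<beta>) *\<^sub>R H))"

lemma boltzmann_mult: "boltzmann a ** boltzmann b = boltzmann (a + b)"
proof -
  have "- ((r * \<beta>) *\<^sub>R H) = r *\<^sub>R (- (\<beta> *\<^sub>R H))" for r
    by simp
  then show ?thesis
    by (simp only: boltzmann_def mexp_scaleR_add)
qed

lemma boltzmann_0: "boltzmann 0 = mat 1"
  by (simp add: boltzmann_def mexp_0)

lemma adj_boltzmann: "adj (boltzmann r) = boltzmann r"
  using hermitian_H by (simp add: boltzmann_def mexp_adj adj_uminus adj_scaleR hermitian_def)

lemma trace_boltzmann_1_real: "trace (boltzmann 1) = of_real (Re (trace (boltzmann 1)))"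
  and Re_trace_boltzmann_1_pos: "0 < Re (trace (boltzmann 1))"
proof -
  have "boltzmann (1/2) \<noteq> 0"
    using boltzmann_mult[of "1/2" "- (1/2)"] mat_1_neq_0 by (auto simp: boltzmann_0)
  moreover have "boltzmann 1 = adj (boltzmann (1/2)) ** boltzmann (1/2)"
    by (simp add: adj_boltzmann boltzmann_mult)
  ultimately show "trace (boltzmann 1) = of_real (Re (trace (boltzmann 1)))"
      "0 < Re (trace (boltzmann 1))"
    by (simp_all add: complex_eq_iff Re_trace_adj_mult_self_pos)
qed

abbreviation gpow :: "real \<Rightarrow> 'd cmat" where
  "gpow \<equiv> gibbs_pow \<beta> H"

lemma partZ_pos: "0 < partZ \<beta> H"
  using Re_trace_boltzmann_1_pos by (simp add: partZ_def boltzmann_def)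

lemma gpow_eq: "gpow r = (1 / partZ \<beta> H powr r) *\<^sub>R boltzmann r"
  by (simp add: gibbs_pow_def boltzmann_def)

lemma gpow_mult: "gpow a ** gpow b = gpow (a + b)"
  using partZ_pos
  by (simp add: gpow_eq matrix_mult_scaleR_left matrix_mult_scaleR_right boltzmann_mult powr_add)

lemma gpow_0: "gpow 0 = mat 1"
  using partZ_pos by (simp add: gpow_eq boltzmann_0)

lemma adj_gpow: "adj (gpow r) = gpow r"
  by (simp add: gpow_eq adj_scaleR adj_boltzmann)

lemma gibbs_eq_gpow: "gibbs \<beta> H = gpow 1"
  using partZ_pos by (simp add: gpow_eq gibbs_def boltzmann_def)

lemma adj_gibbs: "adj (gibbs \<beta> H) = gibbs \<beta> H"
  by (simp add: gibbs_eq_gpow adj_gpow)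

lemma trace_gibbs: "trace (gibbs \<beta> H) = 1"
proof -
  have "trace (boltzmann 1) = of_real (partZ \<beta> H)"
    using trace_boltzmann_1_real by (simp add: partZ_def boltzmann_def)
  then show ?thesis
    using partZ_pos by (simp add: gibbs_def boltzmann_def trace_scaleR)
qed

lemma gpow_sandwich_eq_0_iff: "gpow a ** X ** gpow b = 0 \<longleftrightarrow> X = 0"
proof
  assume "gpow a ** X ** gpow b = 0"
  moreover have "gpow (- a) ** (gpow a ** X ** gpow b) ** gpow (- b) = X"
    by (simp add: matrix_mul_assoc gpow_mult gpow_0) (simp flip: matrix_mul_assoc add: gpow_mult gpow_0)
  ultimately show "X = 0"
    by simp
qed simp


section \<open>The KMS inner product\<close>

abbreviation kms :: "real \<Rightarrow> 'd cmat \<Rightarrow> 'd cmat \<Rightarrow> complex" where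
  "kms s \<equiv> sip \<beta> H s"

definition kms_map :: "real \<Rightarrow> 'd cmat \<Rightarrow> 'd cmat" where
  "kms_map s X = gpow (1 - s) ** X ** gpow s"

lemma kms_eq_trace: "kms s A B = trace (adj A ** kms_map s B)"
  by (simp add: sip_def kms_map_def matrix_mul_assoc)

lemma kms_map_eq_0_iff: "kms_map s X = 0 \<longleftrightarrow> X = 0"
  by (simp add: kms_map_def gpow_sandwich_eq_0_iff)

lemma kms_map_mat_1: "kms_map s (mat 1) = gibbs \<beta> H"
  by (simp add: kms_map_def gpow_mult gibbs_eq_gpow)

lemma linear_kms_map: "linear (kms_map s)"
  by (rule linearI)
    (simp_all add: kms_map_def matrix_add_ldistrib matrix_add_rdistrib matrix_mult_scaleR_left
      matrix_mult_scaleR_right)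

lemma kms_add_right: "kms s A (B + C) = kms s A B + kms s A C"
  by (simp add: sip_def matrix_add_ldistrib matrix_add_rdistrib trace_add)

lemma kms_add_left: "kms s (A + B) C = kms s A C + kms s B C"
  by (simp add: sip_def adj_add matrix_add_rdistrib trace_add)

lemma kms_diff_right: "kms s A (B - C) = kms s A B - kms s A C"
  by (simp add: sip_def matrix_diff_ldistrib matrix_diff_rdistrib trace_sub)

lemma kms_diff_left: "kms s (A - B) C = kms s A C - kms s B C"
  by (simp add: sip_def adj_diff matrix_diff_rdistrib trace_sub)

lemma kms_scaleR_right: "kms s A (r *\<^sub>R B) = of_real r * kms s A B"
  by (simp add: sip_def matrix_mult_scaleR_left matrix_mult_scaleR_right trace_scaleR)

lemma kms_scaleR_left: "kms s (r *\<^sub>R A) B = of_real r * kms s A B"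
  by (simp add: sip_def adj_scaleR matrix_mult_scaleR_left trace_scaleR)

lemma kms_cscale_left: "kms s (cscale c A) B = cnj c * kms s A B"
  by (simp add: sip_def adj_cscale matrix_mult_cscale_left trace_cscale)

lemma kms_uminus_right: "kms s A (- B) = - kms s A B"
  using kms_scaleR_right[of s A "-1" B] by simp

lemma kms_uminus_left: "kms s (- A) B = - kms s A B"
  using kms_scaleR_left[of s "-1" A B] by simp

lemma kms_0_right [simp]: "kms s A 0 = 0"
  by (simp add: sip_def trace_def)

lemma kms_0_left [simp]: "kms s 0 A = 0"
  by (simp add: sip_def trace_def)

lemma kms_commute: "kms s B A = cnj (kms s A B)"
proof -
  have "cnj (kms s A B) = trace (adj (adj A ** gpow (1 - s) ** B ** gpow s))"
    by (simp add: sip_def trace_adj)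
  also have "\<dots> = trace (gpow s ** (adj B ** gpow (1 - s) ** A))"
    by (simp add: adj_mult adj_gpow matrix_mul_assoc)
  also have "\<dots> = kms s B A"
    by (simp add: sip_def trace_mul_sym[of "gpow s"])
  finally show ?thesis
    by simp
qed

lemma Re_kms_commute: "Re (kms s B A) = Re (kms s A B)"
  by (simp add: kms_commute[of s B A])

lemma kms_self_eq_trace:
  "kms s A A = trace (adj (gpow ((1 - s) / 2) ** A ** gpow (s / 2)) ** (gpow ((1 - s) / 2) ** A ** gpow (s / 2)))"
proof -
  let ?S = "gpow ((1 - s) / 2)" and ?T = "gpow (s / 2)"
  have "kms s A A = trace ((adj A ** ?S ** ?S ** A ** ?T) ** ?T)"
    by (simp add: sip_def gpow_mult flip: matrix_mul_assoc)
  also have "\<dots> = trace (?T ** (adj A ** ?S ** ?S ** A ** ?T))"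
    by (rule trace_mul_sym)
  also have "\<dots> = trace (adj (?S ** A ** ?T) ** (?S ** A ** ?T))"
    by (simp add: adj_mult adj_gpow matrix_mul_assoc)
  finally show ?thesis .
qed

lemma kms_self_real: "kms s A A = of_real (Re (kms s A A))"
  by (simp add: kms_self_eq_trace complex_eq_iff)

lemma kms_self_nonneg: "0 \<le> Re (kms s A A)"
  by (simp add: kms_self_eq_trace Re_trace_adj_mult_self_nonneg)

lemma kms_self_pos: "A \<noteq> 0 \<Longrightarrow> 0 < Re (kms s A A)"
  by (simp add: kms_self_eq_trace Re_trace_adj_mult_self_pos gpow_sandwich_eq_0_iff)

lemma kms_self_eq_0_iff: "kms s A A = 0 \<longleftrightarrow> A = 0"
  using kms_self_pos[of A s] by (cases "A = 0") auto

lemma kms_mat_1_right: "kms s X (mat 1) = trace (adj X ** gibbs \<beta> H)"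
  by (simp add: kms_eq_trace kms_map_mat_1)

lemma kms_1_self: "kms 1 V V = trace (adj V ** V ** gibbs \<beta> H)"
  by (simp add: sip_def gpow_0 gibbs_eq_gpow)

lemma quadratic_nonneg_imp_sq_le:
  fixes a b c :: real
  assumes "\<And>t. 0 \<le> a + 2 * t * c + t\<^sup>2 * b" and "0 \<le> b"
  shows "c\<^sup>2 \<le> a * b"
proof (cases "b = 0")
  case True
  have "0 \<le> a + 2 * (- (a + 1) / (2 * c)) * c"
    using assms(1)[of "- (a + 1) / (2 * c)"] True by simp
  then have "c = 0"
    by (cases "c = 0") (simp_all add: field_simps)
  then show ?thesis
    using True by simp
next
  case False
  then have "b > 0"
    using assms(2) by simp
  have "0 \<le> a + 2 * (- c / b) * c + (- c / b)\<^sup>2 * b"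
    by (rule assms(1))
  also have "\<dots> = a - c\<^sup>2 / b"
    using \<open>b > 0\<close> by (simp add: power2_eq_square field_simps)
  finally show ?thesis
    using \<open>b > 0\<close> by (simp add: field_simps mult.commute)
qed

lemma kms_Cauchy_Schwarz: "(Re (kms s A B))\<^sup>2 \<le> Re (kms s A A) * Re (kms s B B)"
proof (rule quadratic_nonneg_imp_sq_le)
  fix t :: real
  have "0 \<le> Re (kms s (A + t *\<^sub>R B) (A + t *\<^sub>R B))"
    by (rule kms_self_nonneg)
  also have "\<dots> = Re (kms s A A) + 2 * t * Re (kms s A B) + t\<^sup>2 * Re (kms s B B)"
    by (simp add: kms_add_left kms_add_right kms_scaleR_left kms_scaleR_right Re_kms_commute[of s B A]
        power2_eq_square algebra_simps)
  finally show "0 \<le> Re (kms s A A) + 2 * t * Re (kms s A B) + t\<^sup>2 * Re (kms s B B)" .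
qed (rule kms_self_nonneg)

definition kms_norm :: "real \<Rightarrow> 'd cmat \<Rightarrow> real" where
  "kms_norm s A = sqrt (Re (kms s A A))"

lemma kms_norm_nonneg: "0 \<le> kms_norm s A"
  using kms_self_nonneg[of s A] by (simp add: kms_norm_def)

lemma kms_norm_power2: "(kms_norm s A)\<^sup>2 = Re (kms s A A)"
  unfolding kms_norm_def by (rule real_sqrt_pow2[OF kms_self_nonneg])

lemma Re_kms_le_kms_norm_mult: "Re (kms s A B) \<le> kms_norm s A * kms_norm s B"
proof -
  have "(Re (kms s A B))\<^sup>2 \<le> (kms_norm s A * kms_norm s B)\<^sup>2"
    using kms_Cauchy_Schwarz[of s A B] by (simp add: power_mult_distrib kms_norm_power2)
  then show ?thesis
    using kms_norm_nonneg[of s A] kms_norm_nonneg[of s B] by (simp add: power2_le_iff_abs_le)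
qed

end


section \<open>Kraus maps\<close>

lemma wkraus_add: "wkraus I w K (A + B) = wkraus I w K A + wkraus I w K B"
  by (simp add: wkraus_def matrix_add_ldistrib matrix_add_rdistrib sum.distrib scaleR_add_right)

lemma wkraus_scaleR: "wkraus I w K (r *\<^sub>R A) = r *\<^sub>R wkraus I w K A"
  by (simp add: wkraus_def matrix_mult_scaleR_left matrix_mult_scaleR_right scaleR_sum_right mult.commute)

lemma wkraus_diff: "wkraus I w K (A - B) = wkraus I w K A - wkraus I w K B"
  using wkraus_add[of I w K B "A - B"] by simp

lemma wkraus_cscale: "wkraus I w K (cscale c A) = cscale c (wkraus I w K A)"
  by (simp add: wkraus_def matrix_mult_cscale_left matrix_mult_cscale_right cscale_sum cscale_scaleR)

lemma adj_wkraus: "adj (wkraus I w K X) = wkraus I w K (adj X)"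
  by (simp add: wkraus_def adj_sum adj_scaleR adj_mult matrix_mul_assoc)

lemma adj_kraus_adj: "adj (kraus_adj I K X) = kraus_adj I K (adj X)"
  by (simp add: kraus_adj_def wkraus_adj_def adj_sum adj_scaleR adj_mult matrix_mul_assoc)

lemma linear_wkraus_adj: "linear (wkraus_adj I w K)"
  by (rule linearI)
    (simp_all add: wkraus_adj_def matrix_add_ldistrib matrix_add_rdistrib sum.distrib scaleR_add_right
      matrix_mult_scaleR_left matrix_mult_scaleR_right scaleR_sum_right mult.commute)

lemma linear_kraus_adj: "linear (kraus_adj I K)"
  by (simp add: kraus_adj_def linear_wkraus_adj)

lemma trace_adj_mult_wkraus: "trace (adj A ** wkraus I w K Y) = trace (adj (wkraus_adj I w K A) ** Y)"
proof -
  have "trace (adj A ** wkraus I w K Y) = (\<Sum>u\<in>I. of_real (w u) * trace ((adj A ** K u ** Y) ** adj (K u)))"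
    by (simp add: wkraus_def matrix_mult_sum_right matrix_mult_scaleR_right trace_sum trace_scaleR
        matrix_mul_assoc)
  also have "\<dots> = (\<Sum>u\<in>I. of_real (w u) * trace (adj (K u) ** adj A ** K u ** Y))"
    by (simp add: trace_mul_sym[of _ "adj (K _)"] matrix_mul_assoc)
  also have "\<dots> = trace (adj (wkraus_adj I w K A) ** Y)"
    by (simp add: wkraus_adj_def adj_sum adj_scaleR adj_mult matrix_mult_sum_left matrix_mult_scaleR_left
        trace_sum trace_scaleR matrix_mul_assoc)
  finally show ?thesis .
qed

lemma trace_adj_mult_kraus: "trace (adj A ** kraus I K Y) = trace (adj (kraus_adj I K A) ** Y)"
  by (simp add: kraus_def kraus_adj_def trace_adj_mult_wkraus)

lemma kraus_adj_mat_1: "is_channel I K \<Longrightarrow> kraus_adj I K (mat 1) = mat 1"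
  by (simp add: is_channel_def kraus_adj_def wkraus_adj_def)

lemma trace_kraus: "is_channel I K \<Longrightarrow> trace (kraus I K Y) = trace Y"
  using trace_adj_mult_kraus[of "mat 1" I K Y] by (simp add: kraus_adj_mat_1)

context hermitian_hamiltonian
begin

lemma kms_map_wkraus_adj:
  assumes "detailed_balance \<beta> H s (wkraus_adj I w K)"
  shows "kms_map s (wkraus_adj I w K X) = wkraus I w K (kms_map s X)"
proof -
  have "trace (adj A ** kms_map s (wkraus_adj I w K X)) = trace (adj A ** wkraus I w K (kms_map s X))" for A
  proof -
    have "trace (adj A ** kms_map s (wkraus_adj I w K X)) = kms s A (wkraus_adj I w K X)"
      by (simp add: kms_eq_trace)
    also have "\<dots> = kms s (wkraus_adj I w K A) X"
      using assms by (simp add: detailed_balance_def)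
    finally show ?thesis
      by (simp add: kms_eq_trace trace_adj_mult_wkraus)
  qed
  then show ?thesis
    using matrix_eq_0_if_trace_adj_mult_eq_0[of "kms_map s (wkraus_adj I w K X) - wkraus I w K (kms_map s X)"]
    by (simp add: matrix_diff_ldistrib trace_sub)
qed

lemma kms_map_kraus_adj:
  assumes "detailed_balance \<beta> H s (kraus_adj I K)"
  shows "kms_map s (kraus_adj I K X) = kraus I K (kms_map s X)"
  using kms_map_wkraus_adj[of s I "\<lambda>_. 1" K X] assms by (simp add: kraus_def kraus_adj_def)

lemma kraus_gibbs_if_detailed_balance:
  assumes "detailed_balance \<beta> H s (kraus_adj I K)" and "is_channel I K"
  shows "kraus I K (gibbs \<beta> H) = gibbs \<beta> H"
  using kms_map_kraus_adj[OF assms(1), of "mat 1"] by (simp add: kraus_adj_mat_1[OF assms(2)] kms_map_mat_1)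

end


section \<open>Self-adjoint maps and the Rayleigh quotient\<close>

lemma linear_coeff_eq_0_if_quadratic_nonpos:
  fixes a c :: real
  assumes "\<And>t. 2 * t * a + t\<^sup>2 * c \<le> 0"
  shows "a = 0"
proof (rule ccontr)
  assume "a \<noteq> 0"
  define k where "k = \<bar>c\<bar> + 1"
  have "k > 0" and "c / k > -1"
    by (auto simp: k_def field_simps abs_if)
  have "2 * (a / k) * a + (a / k)\<^sup>2 * c = (a\<^sup>2 / k) * (2 + c / k)"
    using \<open>k > 0\<close> by (simp add: field_simps power2_eq_square)
  moreover have "(a\<^sup>2 / k) * (2 + c / k) > 0"
    using \<open>k > 0\<close> \<open>c / k > -1\<close> \<open>a \<noteq> 0\<close> by (intro mult_pos_pos) auto
  ultimately show False
    using assms[of "a / k"] by linarith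
qed

lemma eigenvalue_of_square_le_1:
  fixes T :: "'a::real_vector \<Rightarrow> 'a"
  assumes lin: "linear T" and eig: "\<And>c x. x \<noteq> 0 \<Longrightarrow> T x = c *\<^sub>R x \<Longrightarrow> \<bar>c\<bar> \<le> 1"
    and x: "x \<noteq> 0" "T (T x) = \<nu> *\<^sub>R x" and "0 \<le> \<nu>"
  shows "\<nu> \<le> 1"
proof (rule ccontr)
  assume "\<not> \<nu> \<le> 1"
  define a where "a = sqrt \<nu>"
  have "a > 1" and "a * a = \<nu>"
    using \<open>\<not> \<nu> \<le> 1\<close> \<open>0 \<le> \<nu>\<close> by (simp_all add: a_def)
  define y where "y = T x + a *\<^sub>R x"
  \<comment> \<open>Since \<open>T\<^sup>2 - a\<^sup>2 = (T - a)(T + a)\<close>, either \<open>T x = -a x\<close> or \<open>y\<close> is an eigenvector for \<open>a > 1\<close>.\<close>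
  show False
  proof (cases "y = 0")
    case True
    then have "T x = (- a) *\<^sub>R x"
      by (simp add: y_def eq_neg_iff_add_eq_0)
    then show False
      using eig[OF x(1)] \<open>a > 1\<close> by fastforce
  next
    case False
    have "T y = a *\<^sub>R y"
      using x(2) lin by (simp add: y_def linear_add linear_scale scaleR_add_right flip: \<open>a * a = \<nu>\<close>)
    then show False
      using eig[OF False] \<open>a > 1\<close> by fastforce
  qed
qed

context hermitian_hamiltonian
begin

lemma continuous_on_kms [continuous_intros]:
  assumes "continuous_on S f" and "continuous_on S g"
  shows "continuous_on S (\<lambda>x. kms s (f x) (g x))"
proof -
  have "continuous_on UNIV (kms_map s)"
    by (rule linear_continuous_on) (simp add: linear_kms_map flip: linear_conv_bounded_linear)
  then have "continuous_on S (\<lambda>x. kms_map s (g x))"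
    using assms(2) by (rule continuous_on_compose2) simp
  then show ?thesis
    unfolding kms_eq_trace trace_def matrix_matrix_mult_def
    by (simp add: assms(1) continuous_on_component continuous_intros)
qed

lemma kms_orthogonal_mat_1_preserved:
  assumes "detailed_balance \<beta> H s T" and "T (mat 1) = mat 1" and "kms s Z (mat 1) = 0"
  shows "kms s (T Z) (mat 1) = 0"
proof -
  have "kms s (T Z) (mat 1) = kms s Z (T (mat 1))"
    using assms(1) by (simp add: detailed_balance_def)
  then show ?thesis
    using assms(2,3) by simp
qed

definition rayleigh :: "real \<Rightarrow> ('d cmat \<Rightarrow> 'd cmat) \<Rightarrow> 'd cmat \<Rightarrow> real" where
  "rayleigh s T X = Re (kms s X (T X)) / Re (kms s X X)"

lemma rayleigh_scaleR: "linear T \<Longrightarrow> c \<noteq> 0 \<Longrightarrow> rayleigh s T (c *\<^sub>R X) = rayleigh s T X"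
  by (simp add: rayleigh_def linear_scale kms_scaleR_left kms_scaleR_right)

lemma rayleigh_le_iff: "X \<noteq> 0 \<Longrightarrow> rayleigh s T X \<le> c \<longleftrightarrow> Re (kms s X (T X)) \<le> c * Re (kms s X X)"
  using kms_self_pos[of X s] by (simp add: rayleigh_def divide_le_eq)

lemma rayleigh_attains_max:
  assumes "linear T" and "X1 \<noteq> 0" and "kms s X1 e = 0"
  obtains X0 where "X0 \<noteq> 0" and "kms s X0 e = 0"
    and "\<And>X. X \<noteq> 0 \<Longrightarrow> kms s X e = 0 \<Longrightarrow> rayleigh s T X \<le> rayleigh s T X0"
proof -
  define S where "S = sphere (0 :: 'd cmat) 1 \<inter> {X. kms s X e = 0}"
  have normalize_in_S: "(1 / norm X) *\<^sub>R X \<in> S" if "X \<noteq> 0" and "kms s X e = 0" for X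
    using that by (simp add: S_def kms_scaleR_left)
  have "closed {X. kms s X e = 0}"
    by (intro closed_Collect_eq continuous_intros)
  then have "compact S"
    unfolding S_def by (intro compact_Int_closed) auto
  moreover have "S \<noteq> {}"
    using normalize_in_S[OF assms(2,3)] by blast
  moreover have "continuous_on S (rayleigh s T)"
    unfolding rayleigh_def
  proof (intro continuous_intros)
    show "continuous_on S T"
      by (intro linear_continuous_on) (simp add: assms(1) flip: linear_conv_bounded_linear)
    have "X \<noteq> 0" if "X \<in> S" for X
      using that by (auto simp: S_def)
    then show "\<forall>X\<in>S. Re (kms s X X) \<noteq> 0"
      using kms_self_pos[of _ s] by fastforce
  qed
  ultimately obtain X0 where X0: "X0 \<in> S" "\<And>Y. Y \<in> S \<Longrightarrow> rayleigh s T Y \<le> rayleigh s T X0"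
    using continuous_attains_sup by metis
  show ?thesis
  proof
    show "X0 \<noteq> 0" and "kms s X0 e = 0"
      using X0(1) by (auto simp: S_def)
    show "rayleigh s T X \<le> rayleigh s T X0" if "X \<noteq> 0" and "kms s X e = 0" for X
      using X0(2)[OF normalize_in_S[OF that]] rayleigh_scaleR[OF assms(1), of "1 / norm X" s X] that
      by simp
  qed
qed

lemma rayleigh_max_first_variation:
  assumes lin: "linear T" and db: "detailed_balance \<beta> H s T"
    and X0: "kms s X0 e = 0" "X0 \<noteq> 0"
    and max: "\<And>X. X \<noteq> 0 \<Longrightarrow> kms s X e = 0 \<Longrightarrow> rayleigh s T X \<le> rayleigh s T X0"
    and Y: "kms s Y e = 0"
  shows "Re (kms s Y (T X0 - rayleigh s T X0 *\<^sub>R X0)) = 0"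
proof -
  define \<mu> where "\<mu> = rayleigh s T X0"
  define D where "D Z = T Z - \<mu> *\<^sub>R Z" for Z
  have D_add: "D (X0 + t *\<^sub>R Y) = D X0 + t *\<^sub>R D Y" for t
    using lin by (simp add: D_def linear_add linear_scale algebra_simps)
  have form_D: "Re (kms s Z (D Z)) = Re (kms s Z (T Z)) - \<mu> * Re (kms s Z Z)" for Z
    by (simp add: D_def kms_diff_right kms_scaleR_right)
  have "Re (kms s X0 (D X0)) = 0"
    using kms_self_pos[OF X0(2), of s] by (simp add: form_D \<mu>_def rayleigh_def)
  moreover have "Re (kms s X0 (D Y)) = Re (kms s Y (D X0))"
  proof -
    have "Re (kms s X0 (T Y)) = Re (kms s Y (T X0))"
      using db Re_kms_commute[of s "T Y" X0] by (simp add: detailed_balance_def)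
    then show ?thesis
      by (simp add: D_def kms_diff_right kms_scaleR_right Re_kms_commute[of s Y X0])
  qed
  moreover have "Re (kms s (X0 + t *\<^sub>R Y) (D (X0 + t *\<^sub>R Y))) \<le> 0" for t
  proof -
    have "kms s (X0 + t *\<^sub>R Y) e = 0"
      using X0(1) Y by (simp add: kms_add_left kms_scaleR_left)
    then show ?thesis
      using max rayleigh_le_iff[of "X0 + t *\<^sub>R Y" s T \<mu>]
      by (cases "X0 + t *\<^sub>R Y = 0") (simp_all add: form_D \<mu>_def)
  qed
  ultimately have "2 * t * Re (kms s Y (D X0)) + t\<^sup>2 * Re (kms s Y (D Y)) \<le> 0" for t
    unfolding D_add
    by (simp add: kms_add_left kms_add_right kms_scaleR_left kms_scaleR_right power2_eq_square algebra_simps)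
  then show ?thesis
    unfolding D_def \<mu>_def by (rule linear_coeff_eq_0_if_quadratic_nonpos)
qed

lemma rayleigh_max_eigenvector:
  assumes lin: "linear T" and db: "detailed_balance \<beta> H s T" and Te: "T e = \<mu> *\<^sub>R e"
    and X0: "kms s X0 e = 0" "X0 \<noteq> 0"
    and max: "\<And>X. X \<noteq> 0 \<Longrightarrow> kms s X e = 0 \<Longrightarrow> rayleigh s T X \<le> rayleigh s T X0"
  shows "T X0 = rayleigh s T X0 *\<^sub>R X0"
proof -
  define D where "D = T X0 - rayleigh s T X0 *\<^sub>R X0"
  \<comment> \<open>\<open>D\<close> is orthogonal to every \<open>Y \<perp> e\<close> (first variation along \<open>Y\<close> and \<open>i Y\<close>) and to \<open>e\<close> itself.\<close>
  have D_orth: "kms s Y D = 0" if "kms s Y e = 0" for Y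
  proof -
    have "Re (kms s (cscale \<i> Y) D) = 0"
      unfolding D_def using that
      by (intro rayleigh_max_first_variation[OF lin db X0 max]) (simp_all add: kms_cscale_left)
    moreover have "Re (kms s Y D) = 0"
      unfolding D_def by (rule rayleigh_max_first_variation[OF lin db X0 max that])
    ultimately show ?thesis
      by (simp add: kms_cscale_left complex_eq_iff)
  qed
  have "kms s e X0 = 0"
    using X0(1) kms_commute[of s e X0] by simp
  then have "kms s e D = 0"
    using db by (simp add: D_def kms_diff_right kms_scaleR_right detailed_balance_def Te kms_scaleR_left)
  then have "kms s D D = 0"
    using kms_commute[of s D e] by (simp add: D_orth)
  then show ?thesis
    by (simp add: D_def kms_self_eq_0_iff)
qed

lemma kms_form_nonneg_if_eigenvalues_nonneg:
  assumes lin: "linear T" and db: "detailed_balance \<beta> H s T"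
    and eig: "\<And>c X. X \<noteq> 0 \<Longrightarrow> T X = c *\<^sub>R X \<Longrightarrow> 0 \<le> c"
  shows "0 \<le> Re (kms s X (T X))"
proof -
  let ?T = "\<lambda>X. - T X"
  have lin': "linear ?T"
    using lin by (rule linear_compose_neg)
  have db': "detailed_balance \<beta> H s ?T"
    using db by (simp add: detailed_balance_def kms_uminus_right kms_uminus_left)
  obtain X0 where X0: "X0 \<noteq> 0" "kms s X0 0 = 0"
    and max: "\<And>X. X \<noteq> 0 \<Longrightarrow> kms s X 0 = 0 \<Longrightarrow> rayleigh s ?T X \<le> rayleigh s ?T X0"
    using rayleigh_attains_max[OF lin' mat_1_neq_0, of s 0] by auto
  have "?T 0 = 0 *\<^sub>R 0"
    using lin by (simp add: linear_0)
  then have "?T X0 = rayleigh s ?T X0 *\<^sub>R X0"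
    using rayleigh_max_eigenvector[OF lin' db' _ X0(2,1) max] by blast
  then have "T X0 = (- rayleigh s ?T X0) *\<^sub>R X0"
    by (simp add: minus_equation_iff[of "T X0"])
  then have "rayleigh s ?T X0 \<le> 0"
    using eig[OF X0(1)] by fastforce
  then show ?thesis
    using max[of X] rayleigh_le_iff[of X s ?T 0] lin
    by (cases "X = 0") (simp_all add: linear_0 kms_uminus_right)
qed

lemma kms_norm_le_if_eigenvalues_abs_le_1:
  assumes lin: "linear T" and db: "detailed_balance \<beta> H s T"
    and eig: "\<And>c X. X \<noteq> 0 \<Longrightarrow> T X = c *\<^sub>R X \<Longrightarrow> \<bar>c\<bar> \<le> 1"
  shows "kms_norm s (T X) \<le> kms_norm s X"
proof -
  let ?S = "\<lambda>X. T (T X)"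
  have lin': "linear ?S"
    using linear_compose[OF lin lin] by (simp add: o_def)
  have db': "detailed_balance \<beta> H s ?S"
    using db by (simp add: detailed_balance_def)
  have form_S: "Re (kms s Y (?S Y)) = Re (kms s (T Y) (T Y))" for Y
    using db by (simp add: detailed_balance_def)
  obtain X0 where X0: "X0 \<noteq> 0" "kms s X0 0 = 0"
    and max: "\<And>X. X \<noteq> 0 \<Longrightarrow> kms s X 0 = 0 \<Longrightarrow> rayleigh s ?S X \<le> rayleigh s ?S X0"
    using rayleigh_attains_max[OF lin' mat_1_neq_0, of s 0] by auto
  define \<nu> where "\<nu> = rayleigh s ?S X0"
  have "?S 0 = 0 *\<^sub>R 0"
    using lin by (simp add: linear_0)
  then have eigenvector: "?S X0 = \<nu> *\<^sub>R X0"
    unfolding \<nu>_def using rayleigh_max_eigenvector[OF lin' db' _ X0(2,1) max] by blast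
  have "0 \<le> \<nu>"
    unfolding \<nu>_def rayleigh_def form_S by (simp add: kms_self_nonneg)
  then have "\<nu> \<le> 1"
    using eigenvalue_of_square_le_1[OF lin _ X0(1) eigenvector] eig by blast
  have "Re (kms s (T X) (T X)) \<le> Re (kms s X X)"
  proof (cases "X = 0")
    case False
    then have "Re (kms s X (?S X)) \<le> \<nu> * Re (kms s X X)"
      using max[OF False] rayleigh_le_iff[OF False] by (simp add: \<nu>_def)
    also have "\<dots> \<le> Re (kms s X X)"
      using \<open>\<nu> \<le> 1\<close> \<open>0 \<le> \<nu>\<close> kms_self_nonneg[of s X] by (intro mult_left_le_one_le)
    finally show ?thesis
      by (simp add: form_S)
  qed (use lin in \<open>simp add: linear_0\<close>)
  then show ?thesis
    unfolding kms_norm_def by (rule real_sqrt_le_mono)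
qed

lemma kms_norm_le_if_form_le:
  assumes lin: "linear T" and db: "detailed_balance \<beta> H s T"
    and nonneg: "\<And>Z. 0 \<le> Re (kms s Z (T Z))"
    and invariant: "\<And>Z. kms s Z e = 0 \<Longrightarrow> kms s (T Z) e = 0"
    and form_le: "\<And>Z. kms s Z e = 0 \<Longrightarrow> Re (kms s Z (T Z)) \<le> c * Re (kms s Z Z)"
    and "0 \<le> c" and X: "kms s X e = 0"
  shows "kms_norm s (T X) \<le> c * kms_norm s X"
proof -
  define n where "n = Re (kms s (T X) (T X))"
  have form_sym: "Re (kms s Y (T Z)) = Re (kms s Z (T Y))" for Y Z
    using db Re_kms_commute[of s Y "T Z"] by (simp add: detailed_balance_def)
  \<comment> \<open>Cauchy--Schwarz for the positive semidefinite form \<open>(Y, Z) \<mapsto> Re \<langle>Y, T Z\<rangle>\<close>.\<close>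
  have "(Re (kms s X (T (T X))))\<^sup>2 \<le> Re (kms s X (T X)) * Re (kms s (T X) (T (T X)))"
  proof (rule quadratic_nonneg_imp_sq_le)
    fix t :: real
    have "0 \<le> Re (kms s (X + t *\<^sub>R T X) (T (X + t *\<^sub>R T X)))"
      by (rule nonneg)
    also have "\<dots> = Re (kms s X (T X)) + 2 * t * Re (kms s X (T (T X))) + t\<^sup>2 * Re (kms s (T X) (T (T X)))"
      using lin form_sym[of "T X" X]
      by (simp add: linear_add linear_scale kms_add_left kms_add_right kms_scaleR_left kms_scaleR_right
          power2_eq_square algebra_simps)
    finally show "0 \<le> Re (kms s X (T X)) + 2 * t * Re (kms s X (T (T X))) + t\<^sup>2 * Re (kms s (T X) (T (T X)))" .
  qed (rule nonneg)
  also have "Re (kms s X (T (T X))) = n"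
    using db by (simp add: n_def detailed_balance_def)
  also have "Re (kms s X (T X)) * Re (kms s (T X) (T (T X))) \<le> (c * Re (kms s X X)) * (c * n)"
    using form_le[OF X] form_le[OF invariant[OF X]] nonneg \<open>0 \<le> c\<close> kms_self_nonneg[of s X]
    by (intro mult_mono) (simp_all add: n_def)
  finally have "n\<^sup>2 \<le> (c * Re (kms s X X)) * (c * n)" .
  then have "n \<le> c\<^sup>2 * Re (kms s X X)"
    using kms_self_nonneg[of s "T X"] kms_self_nonneg[of s X] \<open>0 \<le> c\<close>
    by (cases "n = 0") (simp_all add: n_def power2_eq_square mult_ac)
  then have "sqrt n \<le> sqrt (c\<^sup>2 * Re (kms s X X))"
    by (rule real_sqrt_le_mono)
  then show ?thesis
    using \<open>0 \<le> c\<close> by (simp add: kms_norm_def n_def real_sqrt_mult)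
qed

end


section \<open>Channels in the Heisenberg picture\<close>

lemma kadison_schwarz_identity:
  fixes X :: "'d::finite cmat"
  assumes "(\<Sum>u\<in>I. adj (K u) ** K u) = mat 1"
  defines "Y \<equiv> kraus_adj I K X"
  shows "(\<Sum>u\<in>I. adj (X ** K u - K u ** Y) ** (X ** K u - K u ** Y)) = kraus_adj I K (adj X ** X) - adj Y ** Y"
proof -
  have expand: "adj (X ** K u - K u ** Y) ** (X ** K u - K u ** Y) =
      adj (K u) ** (adj X ** X) ** K u - (adj (K u) ** adj X ** K u) ** Y
      - adj Y ** (adj (K u) ** X ** K u) + adj Y ** (adj (K u) ** K u) ** Y" for u
    by (simp add: adj_diff adj_mult matrix_diff_rdistrib matrix_diff_ldistrib matrix_mul_assoc algebra_simps)
  have adj_Y: "(\<Sum>u\<in>I. adj (K u) ** adj X ** K u) = adj Y"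
    by (simp add: Y_def kraus_adj_def wkraus_adj_def adj_sum adj_mult matrix_mul_assoc)
  have Y: "(\<Sum>u\<in>I. adj (K u) ** X ** K u) = Y"
    by (simp add: Y_def kraus_adj_def wkraus_adj_def)
  have "(\<Sum>u\<in>I. adj (X ** K u - K u ** Y) ** (X ** K u - K u ** Y)) =
      (\<Sum>u\<in>I. adj (K u) ** (adj X ** X) ** K u) - (\<Sum>u\<in>I. adj (K u) ** adj X ** K u) ** Y
      - adj Y ** (\<Sum>u\<in>I. adj (K u) ** X ** K u) + adj Y ** (\<Sum>u\<in>I. adj (K u) ** K u) ** Y"
    unfolding expand by (simp add: sum.distrib sum_subtractf matrix_mult_sum_left matrix_mult_sum_right)
  also have "\<dots> = kraus_adj I K (adj X ** X) - adj Y ** Y"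
    by (simp add: adj_Y Y assms(1) kraus_adj_def wkraus_adj_def)
  finally show ?thesis .
qed

context hermitian_hamiltonian
begin

lemma trace_kraus_adj_mult_gibbs:
  assumes "kraus I K (gibbs \<beta> H) = gibbs \<beta> H"
  shows "trace (kraus_adj I K W ** gibbs \<beta> H) = trace (W ** gibbs \<beta> H)"
  using trace_adj_mult_kraus[of "adj W" I K "gibbs \<beta> H"] assms by (simp add: adj_kraus_adj)

lemma eigenvalue_kraus_adj_abs_le_1:
  assumes ch: "is_channel I K" and fixed: "kraus I K (gibbs \<beta> H) = gibbs \<beta> H"
    and eig: "kraus_adj I K X = c *\<^sub>R X" and "X \<noteq> 0"
  shows "\<bar>c\<bar> \<le> 1"
proof -
  let ?Y = "kraus_adj I K X"
  define D where "D u = X ** K u - K u ** ?Y" for u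
  \<comment> \<open>Kadison--Schwarz: \<open>N\<^sup>\<dagger>(X\<^sup>\<dagger>X) - N\<^sup>\<dagger>(X)\<^sup>\<dagger>N\<^sup>\<dagger>(X)\<close> is a sum of squares, and \<open>\<rho>\<close> is a fixed point of \<open>N\<close>.\<close>
  have "0 \<le> (\<Sum>u\<in>I. Re (kms 1 (D u) (D u)))"
    by (intro sum_nonneg kms_self_nonneg)
  also have "\<dots> = Re (trace ((\<Sum>u\<in>I. adj (D u) ** D u) ** gibbs \<beta> H))"
    by (simp add: kms_1_self matrix_mult_sum_left trace_sum)
  also have "\<dots> = Re (trace ((kraus_adj I K (adj X ** X) - adj ?Y ** ?Y) ** gibbs \<beta> H))"
    using ch unfolding is_channel_def D_def by (subst kadison_schwarz_identity) simp_all
  also have "\<dots> = (1 - c\<^sup>2) * Re (kms 1 X X)"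
    by (simp add: kms_1_self matrix_diff_rdistrib trace_sub trace_kraus_adj_mult_gibbs[OF fixed] eig
        adj_scaleR matrix_mult_scaleR_left matrix_mult_scaleR_right trace_scaleR power2_eq_square
        algebra_simps)
  finally have "c\<^sup>2 \<le> 1"
    using kms_self_pos[OF \<open>X \<noteq> 0\<close>, of 1] by (simp add: zero_le_mult_iff)
  then show ?thesis
    by (simp add: abs_square_le_1)
qed

lemma kms_norm_kraus_adj_le:
  assumes "is_channel I K" and "detailed_balance \<beta> H s (kraus_adj I K)"
  shows "kms_norm s (kraus_adj I K X) \<le> kms_norm s X"
  using assms eigenvalue_kraus_adj_abs_le_1[OF assms(1) kraus_gibbs_if_detailed_balance[OF assms(2,1)]]
  by (intro kms_norm_le_if_eigenvalues_abs_le_1 linear_kraus_adj) auto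

lemma eigenvalue_kraus_adj_nonneg_le_1:
  assumes "detailed_balance \<beta> H s (kraus_adj I K)"
    and spec: "\<And>c Y. Y \<noteq> 0 \<Longrightarrow> kraus I K Y = cscale c Y \<Longrightarrow> c \<in> \<real> \<and> 0 \<le> Re c \<and> Re c \<le> 1"
    and "X \<noteq> 0" and "kraus_adj I K X = c *\<^sub>R X"
  shows "0 \<le> c \<and> c \<le> 1"
proof -
  have "kraus I K (kms_map s X) = cscale (of_real c) (kms_map s X)"
    using kms_map_kraus_adj[OF assms(1), of X] assms(4)
    by (simp add: linear_scale[OF linear_kms_map] cscale_of_real)
  moreover have "kms_map s X \<noteq> 0"
    using \<open>X \<noteq> 0\<close> by (simp add: kms_map_eq_0_iff)
  ultimately show ?thesis
    using spec by fastforce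
qed

lemma kms_orthogonal_mat_1_kraus_adj:
  assumes "is_channel I K" and "detailed_balance \<beta> H s (kraus_adj I K)" and "kms s X (mat 1) = 0"
  shows "kms s (kraus_adj I K X) (mat 1) = 0"
  using kms_orthogonal_mat_1_preserved[OF assms(2) kraus_adj_mat_1[OF assms(1)] assms(3)] .

end


section \<open>Uniqueness of the fixed state\<close>

definition qform :: "'d::finite cmat \<Rightarrow> complex^'d \<Rightarrow> complex" where
  "qform A v = (\<Sum>i\<in>UNIV. \<Sum>j\<in>UNIV. cnj (v $ i) * A $ i $ j * v $ j)"

lemma psd_iff_qform: "psd A \<longleftrightarrow> (\<forall>v. Im (qform A v) = 0 \<and> 0 \<le> Re (qform A v))"
  by (simp add: psd_def qform_def Let_def)

lemma qform_add: "qform (A + B) v = qform A v + qform B v"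
  by (simp add: qform_def distrib_left distrib_right sum.distrib)

lemma qform_scaleR: "qform (r *\<^sub>R A) v = of_real r * qform A v"
  by (simp only: qform_def vector_scaleR_component) (simp add: sum_distrib_left scaleR_conv_of_real mult_ac)

lemma qform_scaleR_vec: "qform A (r *\<^sub>R v) = of_real (r\<^sup>2) * qform A v"
  by (simp only: qform_def vector_scaleR_component)
    (simp add: sum_distrib_left scaleR_conv_of_real mult_ac power2_eq_square)

lemma Im_qform_hermitian: "adj A = A \<Longrightarrow> Im (qform A v) = 0"
proof -
  assume "adj A = A"
  have "cnj (qform A v) = qform (adj A) v"
    unfolding qform_def by (simp add: mult_ac) (subst sum.swap, simp)
  with \<open>adj A = A\<close> show ?thesis
    by (metis Reals_cnj_iff complex_is_Real_iff)
qed

lemma Re_qform_adj_mult_self_pos: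
  assumes "B *v v \<noteq> 0"
  shows "0 < Re (qform (adj B ** B) v)"
proof -
  have "qform (adj B ** B) v = (\<Sum>k\<in>UNIV. cnj ((B *v v) $ k) * (B *v v) $ k)"
    unfolding qform_def
    by (simp add: matrix_matrix_mult_def matrix_vector_mult_def sum_distrib_left sum_distrib_right mult_ac)
      (subst sum.swap, subst (2) sum.swap, simp add: sum_distrib_left mult_ac)
  then have "Re (qform (adj B ** B) v) = (\<Sum>k\<in>UNIV. (cmod ((B *v v) $ k))\<^sup>2)"
    by (simp add: complex_norm_square[symmetric] mult.commute[of "cnj _"])
  moreover obtain k where "(B *v v) $ k \<noteq> 0"
    using assms by (auto simp: vec_eq_iff)
  then have "0 < (\<Sum>k\<in>UNIV. (cmod ((B *v v) $ k))\<^sup>2)"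
    by (intro sum_pos2[of _ k]) auto
  ultimately show ?thesis
    by simp
qed

lemma qform_bounded_on_sphere:
  obtains C where "0 \<le> C" and "\<And>u. norm u = 1 \<Longrightarrow> cmod (qform A u) \<le> C"
proof -
  have "continuous_on (sphere 0 1) (\<lambda>u. cmod (qform A u))"
    unfolding qform_def by (intro continuous_intros)
  moreover have "sphere (0 :: complex^'d) 1 \<noteq> {}"
    by simp
  ultimately obtain u1 where "\<forall>u\<in>sphere 0 1. cmod (qform A u) \<le> cmod (qform A u1)"
    using continuous_attains_sup[OF compact_sphere] by blast
  then show ?thesis
    using that[of "cmod (qform A u1)"] by simp
qed

lemma Re_qform_nonneg_if_unit_sphere:
  assumes "\<And>u. norm u = 1 \<Longrightarrow> 0 \<le> Re (qform A u)"
  shows "0 \<le> Re (qform A v)"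
proof (cases "v = 0")
  case False
  then have "v = norm v *\<^sub>R ((1 / norm v) *\<^sub>R v)"
    by simp
  then have "qform A v = of_real ((norm v)\<^sup>2) * qform A ((1 / norm v) *\<^sub>R v)"
    by (metis qform_scaleR_vec)
  then show ?thesis
    using assms[of "(1 / norm v) *\<^sub>R v"] False by simp
qed (simp add: qform_def)

context hermitian_hamiltonian
begin

lemma Re_qform_gibbs_pos:
  assumes "v \<noteq> 0"
  shows "0 < Re (qform (gibbs \<beta> H) v)"
proof -
  have "gpow (- (1/2)) *v (gpow (1/2) *v v) = v"
    by (simp add: matrix_vector_mul_assoc gpow_mult gpow_0)
  then have "gpow (1/2) *v v \<noteq> 0"
    using assms by auto
  moreover have "gibbs \<beta> H = adj (gpow (1/2)) ** gpow (1/2)"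
    by (simp add: adj_gpow gpow_mult gibbs_eq_gpow)
  ultimately show ?thesis
    by (simp add: Re_qform_adj_mult_self_pos)
qed

lemma qform_gibbs_bounded_below:
  obtains m where "0 < m" and "\<And>u. norm u = 1 \<Longrightarrow> m \<le> Re (qform (gibbs \<beta> H) u)"
proof -
  have "continuous_on (sphere 0 1) (\<lambda>u. Re (qform (gibbs \<beta> H) u))"
    unfolding qform_def by (intro continuous_intros)
  moreover have "sphere (0 :: complex^'d) 1 \<noteq> {}"
    by simp
  ultimately obtain u0 where "u0 \<in> sphere 0 1"
    and "\<forall>u\<in>sphere 0 1. Re (qform (gibbs \<beta> H) u0) \<le> Re (qform (gibbs \<beta> H) u)"
    using continuous_attains_inf[OF compact_sphere] by blast
  moreover from this(1) have "0 < Re (qform (gibbs \<beta> H) u0)"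
    by (intro Re_qform_gibbs_pos) auto
  ultimately show ?thesis
    using that by simp
qed

lemma density_gibbs_perturbation:
  assumes herm: "adj Z = Z" and traceless: "trace Z = 0"
  obtains \<epsilon> where "\<epsilon> > 0" and "density (gibbs \<beta> H + \<epsilon> *\<^sub>R Z)"
proof -
  let ?\<rho> = "gibbs \<beta> H"
  obtain m where "0 < m" and m: "\<And>u. norm u = 1 \<Longrightarrow> m \<le> Re (qform ?\<rho> u)"
    using qform_gibbs_bounded_below by blast
  obtain C where "0 \<le> C" and C: "\<And>u. norm u = 1 \<Longrightarrow> cmod (qform Z u) \<le> C"
    using qform_bounded_on_sphere by blast
  define \<epsilon> where "\<epsilon> = m / (C + 1)"
  have "0 < \<epsilon>" and "\<epsilon> * C \<le> m"
    using \<open>0 < m\<close> \<open>0 \<le> C\<close> by (simp_all add: \<epsilon>_def field_simps)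
  have herm_perturbed: "adj (?\<rho> + \<epsilon> *\<^sub>R Z) = ?\<rho> + \<epsilon> *\<^sub>R Z"
    by (simp add: adj_add adj_scaleR adj_gibbs herm)
  have "0 \<le> Re (qform (?\<rho> + \<epsilon> *\<^sub>R Z) v)" for v
  proof (rule Re_qform_nonneg_if_unit_sphere)
    fix u :: "complex^'d"
    assume "norm u = 1"
    have "\<epsilon> * (- C) \<le> \<epsilon> * Re (qform Z u)"
      using C[OF \<open>norm u = 1\<close>] abs_Re_le_cmod[of "qform Z u"] \<open>0 < \<epsilon>\<close> by (intro mult_left_mono) auto
    then show "0 \<le> Re (qform (?\<rho> + \<epsilon> *\<^sub>R Z) u)"
      using m[OF \<open>norm u = 1\<close>] \<open>\<epsilon> * C \<le> m\<close> by (simp add: qform_add qform_scaleR)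
  qed
  then have "psd (?\<rho> + \<epsilon> *\<^sub>R Z)"
    using Im_qform_hermitian[OF herm_perturbed] by (simp add: psd_iff_qform)
  moreover have "trace (?\<rho> + \<epsilon> *\<^sub>R Z) = 1"
    by (simp add: trace_add trace_scaleR traceless trace_gibbs)
  ultimately show ?thesis
    using that \<open>0 < \<epsilon>\<close> herm_perturbed by (simp add: density_def hermitian_def)
qed

end

lemma hermitian_fixed_point:
  assumes "kraus I K Y = Y" and "trace Y = 0" and "Y \<noteq> 0"
  obtains Z where "Z \<noteq> 0" and "adj Z = Z" and "kraus I K Z = Z" and "trace Z = 0"
proof -
  have fixed_adj: "kraus I K (adj Y) = adj Y"
    using adj_wkraus[of I "\<lambda>_. 1" K Y] assms(1) by (simp add: kraus_def)
  \<comment> \<open>Either the real part \<open>Y + Y\<^sup>\<dagger>\<close> or the imaginary part \<open>i (Y - Y\<^sup>\<dagger>)\<close> of \<open>Y\<close> is nonzero.\<close>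
  show ?thesis
  proof (cases "Y + adj Y = 0")
    case False
    show ?thesis
      by (rule that[of "Y + adj Y"])
        (use False assms(1,2) fixed_adj in \<open>simp_all add: adj_add trace_add trace_adj kraus_def wkraus_add\<close>)
  next
    case True
    then have "Y - adj Y = 2 *\<^sub>R Y"
      by (simp add: scaleR_2 add_eq_0_iff2 diff_conv_add_uminus)
    then have "cscale \<i> (Y - adj Y) \<noteq> 0"
      using \<open>Y \<noteq> 0\<close> by (simp add: cscale_eq_0_iff)
    moreover have "adj (cscale \<i> (Y - adj Y)) = cscale \<i> (Y - adj Y)"
      by (simp add: adj_cscale adj_diff vec_eq_iff algebra_simps)
    moreover have "kraus I K (cscale \<i> (Y - adj Y)) = cscale \<i> (Y - adj Y)"
      using assms(1) fixed_adj by (simp add: kraus_def wkraus_cscale wkraus_diff)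
    moreover have "trace (cscale \<i> (Y - adj Y)) = 0"
      using assms(2) by (simp add: trace_cscale trace_sub trace_adj)
    ultimately show ?thesis
      by (rule that)
  qed
qed

context hermitian_hamiltonian
begin

lemma trace_kms_map: "trace (kms_map s X) = cnj (kms s X (mat 1))"
proof -
  have "trace (kms_map s X) = trace (gpow s ** (gpow (1 - s) ** X))"
    by (simp add: kms_map_def trace_mul_sym[of _ "gpow s"] matrix_mul_assoc)
  also have "\<dots> = trace (adj (adj X ** gibbs \<beta> H))"
    by (simp add: adj_mult adj_gpow gibbs_eq_gpow gpow_mult matrix_mul_assoc)
  finally show ?thesis
    by (simp add: kms_mat_1_right trace_adj)
qed

lemma kraus_adj_fixed_orthogonal_eq_0:
  assumes db: "detailed_balance \<beta> H s (kraus_adj I K)"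
    and fixed: "kraus I K (gibbs \<beta> H) = gibbs \<beta> H"
    and unique: "\<And>\<sigma>. density \<sigma> \<Longrightarrow> kraus I K \<sigma> = \<sigma> \<Longrightarrow> \<sigma> = gibbs \<beta> H"
    and orth: "kms s X (mat 1) = 0" and X_fixed: "kraus_adj I K X = X"
  shows "X = 0"
proof (rule ccontr)
  assume "X \<noteq> 0"
  let ?Y = "kms_map s X"
  have "kraus I K ?Y = ?Y"
    using kms_map_kraus_adj[OF db, of X] X_fixed by simp
  moreover have "trace ?Y = 0"
    using orth by (simp add: trace_kms_map)
  moreover have "?Y \<noteq> 0"
    using \<open>X \<noteq> 0\<close> by (simp add: kms_map_eq_0_iff)
  ultimately obtain Z where Z: "Z \<noteq> 0" "adj Z = Z" "kraus I K Z = Z" "trace Z = 0"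
    by (rule hermitian_fixed_point)
  obtain \<epsilon> where "\<epsilon> > 0" and "density (gibbs \<beta> H + \<epsilon> *\<^sub>R Z)"
    using density_gibbs_perturbation[OF Z(2,4)] by blast
  moreover have "kraus I K (gibbs \<beta> H + \<epsilon> *\<^sub>R Z) = gibbs \<beta> H + \<epsilon> *\<^sub>R Z"
    using fixed Z(3) by (simp add: kraus_def wkraus_add wkraus_scaleR)
  ultimately have "gibbs \<beta> H + \<epsilon> *\<^sub>R Z = gibbs \<beta> H"
    using unique by blast
  then show False
    using \<open>\<epsilon> > 0\<close> Z(1) by simp
qed

end


section \<open>The spectral gap\<close>

context hermitian_hamiltonian
begin

lemma Re_kms_divide_kms_self: "Re (kms s X (T X) / kms s X X) = rayleigh s T X"
  by (subst kms_self_real) (simp add: rayleigh_def)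

lemma gap_eq_max_rayleigh:
  assumes "X0 \<noteq> 0" and "kms s X0 (mat 1) = 0"
    and max: "\<And>X. X \<noteq> 0 \<Longrightarrow> kms s X (mat 1) = 0 \<Longrightarrow> rayleigh s T X \<le> rayleigh s T X0"
  shows "gap \<beta> H s T = 1 - rayleigh s T X0"
proof -
  have "Sup {Re (kms s X (T X) / kms s X X) | X. X \<noteq> 0 \<and> kms s X (mat 1) = 0} = rayleigh s T X0"
    using assms by (intro cSup_eq_maximum) (auto simp: Re_kms_divide_kms_self)
  then show ?thesis
    by (simp add: gap_def)
qed

lemma rayleigh_max_nonneg_less_1:
  assumes lin: "linear T" and db: "detailed_balance \<beta> H s T" and T_1: "T (mat 1) = mat 1"
    and eig: "\<And>c X. X \<noteq> 0 \<Longrightarrow> T X = c *\<^sub>R X \<Longrightarrow> 0 \<le> c \<and> c \<le> 1"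
    and no_fixed: "\<And>X. kms s X (mat 1) = 0 \<Longrightarrow> T X = X \<Longrightarrow> X = 0"
    and X0: "X0 \<noteq> 0" "kms s X0 (mat 1) = 0"
    and max: "\<And>X. X \<noteq> 0 \<Longrightarrow> kms s X (mat 1) = 0 \<Longrightarrow> rayleigh s T X \<le> rayleigh s T X0"
  shows "0 \<le> rayleigh s T X0 \<and> rayleigh s T X0 < 1"
proof -
  have "T (mat 1) = 1 *\<^sub>R mat 1"
    using T_1 by simp
  then have eigenvector: "T X0 = rayleigh s T X0 *\<^sub>R X0"
    using rayleigh_max_eigenvector[OF lin db _ X0(2,1) max] by blast
  have "rayleigh s T X0 \<noteq> 1"
  proof
    assume "rayleigh s T X0 = 1"
    then have "T X0 = X0"
      using eigenvector by simp
    then show False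
      using no_fixed[OF X0(2)] X0(1) by blast
  qed
  then show ?thesis
    using eig[OF X0(1) eigenvector] by linarith
qed

lemma spectral_gap_contraction:
  assumes lin: "linear T" and db: "detailed_balance \<beta> H s T" and T_1: "T (mat 1) = mat 1"
    and eig: "\<And>c X. X \<noteq> 0 \<Longrightarrow> T X = c *\<^sub>R X \<Longrightarrow> 0 \<le> c \<and> c \<le> 1"
    and no_fixed: "\<And>X. kms s X (mat 1) = 0 \<Longrightarrow> T X = X \<Longrightarrow> X = 0"
    and X1: "X1 \<noteq> 0" "kms s X1 (mat 1) = 0"
  shows "0 < gap \<beta> H s T" and "gap \<beta> H s T \<le> 1"
    and "\<And>X. kms s X (mat 1) = 0 \<Longrightarrow> kms_norm s (T X) \<le> (1 - gap \<beta> H s T) * kms_norm s X"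
proof -
  obtain X0 where X0: "X0 \<noteq> 0" "kms s X0 (mat 1) = 0"
    and max: "\<And>X. X \<noteq> 0 \<Longrightarrow> kms s X (mat 1) = 0 \<Longrightarrow> rayleigh s T X \<le> rayleigh s T X0"
    using rayleigh_attains_max[OF lin X1] by auto
  have gap_eq: "gap \<beta> H s T = 1 - rayleigh s T X0"
    by (rule gap_eq_max_rayleigh[OF X0 max])
  have bounds: "0 \<le> rayleigh s T X0 \<and> rayleigh s T X0 < 1"
    using rayleigh_max_nonneg_less_1[OF lin db T_1 _ _ X0] eig no_fixed max by blast
  then show "0 < gap \<beta> H s T" and "gap \<beta> H s T \<le> 1"
    by (simp_all add: gap_eq)
  have "0 \<le> c" if "X \<noteq> 0" and "T X = c *\<^sub>R X" for c X
    using eig[OF that] by simp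
  then have nonneg: "0 \<le> Re (kms s Z (T Z))" for Z
    by (rule kms_form_nonneg_if_eigenvalues_nonneg[OF lin db])
  have form_le: "Re (kms s Z (T Z)) \<le> (1 - gap \<beta> H s T) * Re (kms s Z Z)" if "kms s Z (mat 1) = 0" for Z
  proof (cases "Z = 0")
    case False
    then show ?thesis
      using max[OF False that] rayleigh_le_iff[OF False, of s T "rayleigh s T X0"] by (simp add: gap_eq)
  qed simp
  show "kms_norm s (T X) \<le> (1 - gap \<beta> H s T) * kms_norm s X" if "kms s X (mat 1) = 0" for X
    using kms_norm_le_if_form_le[OF lin db nonneg kms_orthogonal_mat_1_preserved[OF db T_1] form_le _ that]
      bounds by (simp add: gap_eq)
qed

lemma exists_nonzero_orthogonal_mat_1:
  assumes "2 \<le> CARD('d)"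
  obtains X where "X \<noteq> 0" and "kms s X (mat 1) = 0"
proof -
  obtain i j :: 'd where "i \<noteq> j"
    using assms by (metis card_le_Suc_iff numeral_2_eq_2 ex_in_conv insertCI)
  define E :: "'d cmat" where "E = (\<chi> a b. if a = i \<and> b = j then 1 else 0)"
  \<comment> \<open>Project the matrix unit \<open>E\<^sub>i\<^sub>j\<close> onto the orthogonal complement of \<open>I\<close>.\<close>
  define Y where "Y = E - cscale (cnj (kms s E (mat 1) / kms s (mat 1) (mat 1))) (mat 1)"
  have "kms s (mat 1) (mat 1) \<noteq> 0"
    using mat_1_neq_0 by (simp add: kms_self_eq_0_iff)
  then have "kms s Y (mat 1) = 0"
    by (simp add: Y_def kms_diff_left kms_cscale_left)
  moreover have "Y $ i $ j = 1"
    using \<open>i \<noteq> j\<close> by (simp add: Y_def E_def mat_def)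
  then have "Y \<noteq> 0"
    by auto
  ultimately show ?thesis
    using that by blast
qed

lemma kraus_adj_spectral_gap:
  assumes N: "is_channel I K" "detailed_balance \<beta> H s (kraus_adj I K)"
    and fixed: "kraus I K (gibbs \<beta> H) = gibbs \<beta> H"
    and unique: "\<And>\<sigma>. density \<sigma> \<Longrightarrow> kraus I K \<sigma> = \<sigma> \<Longrightarrow> \<sigma> = gibbs \<beta> H"
    and spec: "\<And>c Y. Y \<noteq> 0 \<Longrightarrow> kraus I K Y = cscale c Y \<Longrightarrow> c \<in> \<real> \<and> 0 \<le> Re c \<and> Re c \<le> 1"
    and "2 \<le> CARD('d)"
  shows "0 < gap \<beta> H s (kraus_adj I K)" and "gap \<beta> H s (kraus_adj I K) \<le> 1"
    and "\<And>X. kms s X (mat 1) = 0 \<Longrightarrow>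
      kms_norm s (kraus_adj I K X) \<le> (1 - gap \<beta> H s (kraus_adj I K)) * kms_norm s X"
proof -
  have eigenvalues: "0 \<le> c \<and> c \<le> 1" if "X \<noteq> 0" and "kraus_adj I K X = c *\<^sub>R X" for c X
    using eigenvalue_kraus_adj_nonneg_le_1[OF N(2) _ that] spec by blast
  have no_fixed: "X = 0" if "kms s X (mat 1) = 0" and "kraus_adj I K X = X" for X
    using kraus_adj_fixed_orthogonal_eq_0[OF N(2) fixed _ that] unique by blast
  obtain X1 where "X1 \<noteq> 0" and "kms s X1 (mat 1) = 0"
    using exists_nonzero_orthogonal_mat_1[OF \<open>2 \<le> CARD('d)\<close>] by blast
  then show "0 < gap \<beta> H s (kraus_adj I K)" and "gap \<beta> H s (kraus_adj I K) \<le> 1"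
    and "\<And>X. kms s X (mat 1) = 0 \<Longrightarrow>
      kms_norm s (kraus_adj I K X) \<le> (1 - gap \<beta> H s (kraus_adj I K)) * kms_norm s X"
    using spectral_gap_contraction[OF linear_kraus_adj N(2) kraus_adj_mat_1[OF N(1)]] eigenvalues no_fixed
    by blast+
qed

end


section \<open>Correlations as KMS inner products\<close>

lemma trace_adj_mult_funpow:
  fixes F G :: "'d::finite cmat \<Rightarrow> 'd cmat"
  assumes "\<And>A Y. trace (adj A ** F Y) = trace (adj (G A) ** Y)"
  shows "trace (adj A ** (F ^^ t) Y) = trace (adj ((G ^^ t) A) ** Y)"
proof (induction t arbitrary: A)
  case (Suc t)
  have "trace (adj A ** (F ^^ Suc t) Y) = trace (adj (G A) ** (F ^^ t) Y)"
    by (simp add: assms)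
  also have "\<dots> = trace (adj ((G ^^ Suc t) A) ** Y)"
    by (simp only: Suc funpow_Suc_right o_apply)
  finally show ?case .
qed simp

lemma trace_adj_mult_Mhat: "trace (adj A ** Mhat \<beta> H U Ob Y) = trace (adj (Mhat_adj \<beta> H U Ob A) ** Y)"
  by (simp add: Mhat_def Mhat_adj_def trace_adj_mult_wkraus)

context hermitian_hamiltonian
begin

lemma Cor_eq_kms:
  assumes N: "is_channel I K" "detailed_balance \<beta> H s (kraus_adj I K)"
    and M: "is_channel U Ob" and Mhat: "detailed_balance \<beta> H s (Mhat_adj \<beta> H U Ob)"
  defines "A \<equiv> Mhat_adj \<beta> H U Ob (mat 1)"
    and "E\<^sub>H \<equiv> \<lambda>X. kraus_adj U Ob (kraus_adj I K (kraus_adj U Ob X))"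
  shows "Cor \<beta> H I K U Ob t = Re (kms s (kraus_adj U Ob ((E\<^sub>H ^^ t) A)) (kraus_adj I K A))"
proof -
  let ?E = "kraus U Ob \<circ> kraus I K \<circ> kraus U Ob"
    and ?Ehat = "\<lambda>Y. kraus U Ob (kraus I K (Mhat \<beta> H U Ob Y))"
  have trace_Ehat: "trace (?Ehat Y) = trace (adj A ** Y)" for Y
    using trace_adj_mult_Mhat[of "mat 1" \<beta> H U Ob Y] by (simp add: A_def trace_kraus[OF M] trace_kraus[OF N(1)])
  have E_dual: "trace (adj B ** ?E Y) = trace (adj (E\<^sub>H B) ** Y)" for B Y
    by (simp add: E\<^sub>H_def trace_adj_mult_kraus)
  have "Cor \<beta> H I K U Ob t = Re (trace (?Ehat ((?E ^^ t) (?Ehat (gibbs \<beta> H)))))"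
    by (simp add: Cor_def Let_def)
  also have "\<dots> = Re (trace (adj A ** (?E ^^ t) (?Ehat (gibbs \<beta> H))))"
    by (simp only: trace_Ehat)
  also have "\<dots> = Re (trace (adj ((E\<^sub>H ^^ t) A) ** ?Ehat (gibbs \<beta> H)))"
    by (simp only: trace_adj_mult_funpow[OF E_dual])
  also have "\<dots> = Re (kms s (Mhat_adj \<beta> H U Ob (kraus_adj I K (kraus_adj U Ob ((E\<^sub>H ^^ t) A)))) (mat 1))"
    by (simp add: trace_adj_mult_kraus trace_adj_mult_Mhat kms_mat_1_right)
  also have "\<dots> = Re (kms s (kraus_adj U Ob ((E\<^sub>H ^^ t) A)) (kraus_adj I K A))"
    using Mhat N(2) by (simp add: A_def detailed_balance_def)
  finally show ?thesis .
qed

lemma trace_sandwich_gibbs_real: "trace (V ** gibbs \<beta> H ** adj V) = of_real (Re (trace (V ** gibbs \<beta> H ** adj V)))"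
proof -
  have "trace (V ** gibbs \<beta> H ** adj V) = kms 1 V V"
    by (simp add: kms_1_self trace_mul_sym[of "V ** gibbs \<beta> H"] matrix_mul_assoc)
  then show ?thesis
    using kms_self_real[of 1 V] by simp
qed

lemma kms_Mhat_adj_mat_1_orthogonal:
  assumes "is_channel U Ob"
  shows "kms s (Mhat_adj \<beta> H U Ob (mat 1)) (mat 1) = 0"
proof -
  let ?p = "\<lambda>u. Re (trace (Ob u ** gibbs \<beta> H ** adj (Ob u)))"
  have "(\<Sum>u\<in>U. ?p u) = Re (trace (kraus U Ob (gibbs \<beta> H)))"
    by (simp add: kraus_def wkraus_def trace_sum)
  then have total: "(\<Sum>u\<in>U. ?p u) = 1"
    by (simp add: trace_kraus[OF assms] trace_gibbs)
  have "kms s (Mhat_adj \<beta> H U Ob (mat 1)) (mat 1) = trace (Mhat \<beta> H U Ob (gibbs \<beta> H))"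
    using trace_adj_mult_Mhat[of "mat 1" \<beta> H U Ob "gibbs \<beta> H"] by (simp add: kms_mat_1_right)
  also have "\<dots> = (\<Sum>u\<in>U. of_real (u - Exp U Ob (gibbs \<beta> H)) * trace (Ob u ** gibbs \<beta> H ** adj (Ob u)))"
    by (simp add: Mhat_def wkraus_def trace_sum trace_scaleR)
  also have "\<dots> = of_real (\<Sum>u\<in>U. (u - Exp U Ob (gibbs \<beta> H)) * ?p u)"
    unfolding of_real_sum of_real_mult by (rule sum.cong[OF refl], subst trace_sandwich_gibbs_real, rule refl)
  also have "(\<Sum>u\<in>U. (u - Exp U Ob (gibbs \<beta> H)) * ?p u) = 0"
    using total by (simp add: Exp_def left_diff_distrib sum_subtractf flip: sum_distrib_left)
  finally show ?thesis
    by simp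
qed

lemma Cov_eq_kms:
  assumes "detailed_balance \<beta> H s (Mhat_adj \<beta> H U Ob)"
  shows "Cov U Ob (gibbs \<beta> H) = Re (kms s (Mhat_adj \<beta> H U Ob (mat 1)) (Mhat_adj \<beta> H U Ob (mat 1)))"
proof -
  let ?w = "\<lambda>u. u - Exp U Ob (gibbs \<beta> H)" and ?A = "Mhat_adj \<beta> H U Ob (mat 1)"
  have "Re (trace (Mhat \<beta> H U Ob (Mhat \<beta> H U Ob (gibbs \<beta> H)))) =
      (\<Sum>y\<in>U. \<Sum>x\<in>U. ?w y * ?w x * Re (trace (Ob y ** Ob x ** gibbs \<beta> H ** adj (Ob x) ** adj (Ob y))))"
    by (simp add: Mhat_def wkraus_def trace_sum trace_scaleR matrix_mult_sum_left matrix_mult_sum_right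
        matrix_mult_scaleR_left matrix_mult_scaleR_right sum_distrib_left matrix_mul_assoc mult_ac)
  also have "\<dots> = Cov U Ob (gibbs \<beta> H)"
    by (subst sum.swap) (simp add: Cov_def mult_ac)
  finally have "Cov U Ob (gibbs \<beta> H) = Re (trace (Mhat \<beta> H U Ob (Mhat \<beta> H U Ob (gibbs \<beta> H))))" ..
  also have "trace (Mhat \<beta> H U Ob (Mhat \<beta> H U Ob (gibbs \<beta> H))) = kms s (Mhat_adj \<beta> H U Ob ?A) (mat 1)"
    using trace_adj_mult_Mhat[of "mat 1" \<beta> H U Ob] by (simp add: trace_adj_mult_Mhat kms_mat_1_right)
  also have "\<dots> = kms s ?A ?A"
    using assms by (simp add: detailed_balance_def)
  finally show ?thesis .
qed

lemma Cor_le_geometric: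
  assumes N: "is_channel I K" "detailed_balance \<beta> H s (kraus_adj I K)"
    and M: "is_channel U Ob" "detailed_balance \<beta> H s (kraus_adj U Ob)"
    and Mhat: "detailed_balance \<beta> H s (Mhat_adj \<beta> H U Ob)"
    and N_contraction: "\<And>X. kms s X (mat 1) = 0 \<Longrightarrow> kms_norm s (kraus_adj I K X) \<le> \<kappa> * kms_norm s X"
    and "0 \<le> \<kappa>"
  shows "Cor \<beta> H I K U Ob t \<le> \<kappa> ^ Suc t * Cov U Ob (gibbs \<beta> H)"
proof -
  define A where "A = Mhat_adj \<beta> H U Ob (mat 1)"
  define E\<^sub>H where "E\<^sub>H X = kraus_adj U Ob (kraus_adj I K (kraus_adj U Ob X))" for X
  have A_orth: "kms s A (mat 1) = 0"
    unfolding A_def by (rule kms_Mhat_adj_mat_1_orthogonal[OF M(1)])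
  have M_contraction: "kms_norm s (kraus_adj U Ob X) \<le> kms_norm s X" for X
    by (rule kms_norm_kraus_adj_le[OF M])
  have orth: "kms s ((E\<^sub>H ^^ k) A) (mat 1) = 0" for k
    by (induction k) (simp_all add: A_orth E\<^sub>H_def kms_orthogonal_mat_1_kraus_adj N M)
  have norm: "kms_norm s ((E\<^sub>H ^^ k) A) \<le> \<kappa> ^ k * kms_norm s A" for k
  proof (induction k)
    case (Suc k)
    let ?B = "(E\<^sub>H ^^ k) A"
    have "kms_norm s (E\<^sub>H ?B) \<le> kms_norm s (kraus_adj I K (kraus_adj U Ob ?B))"
      unfolding E\<^sub>H_def by (rule M_contraction)
    also have "\<dots> \<le> \<kappa> * kms_norm s (kraus_adj U Ob ?B)"
      using orth[of k] by (intro N_contraction kms_orthogonal_mat_1_kraus_adj M)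
    also have "\<dots> \<le> \<kappa> * (\<kappa> ^ k * kms_norm s A)"
      using M_contraction[of ?B] Suc \<open>0 \<le> \<kappa>\<close> by (intro mult_left_mono) auto
    finally show ?case
      by simp
  qed simp
  have "Cor \<beta> H I K U Ob t = Re (kms s (kraus_adj U Ob ((E\<^sub>H ^^ t) A)) (kraus_adj I K A))"
    unfolding A_def E\<^sub>H_def by (rule Cor_eq_kms[OF N M(1) Mhat])
  also have "\<dots> \<le> kms_norm s (kraus_adj U Ob ((E\<^sub>H ^^ t) A)) * kms_norm s (kraus_adj I K A)"
    by (rule Re_kms_le_kms_norm_mult)
  also have "\<dots> \<le> (\<kappa> ^ t * kms_norm s A) * (\<kappa> * kms_norm s A)"
    using M_contraction norm N_contraction[OF A_orth] \<open>0 \<le> \<kappa>\<close>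
    by (intro mult_mono) (auto intro: order_trans simp: kms_norm_nonneg)
  also have "\<dots> = \<kappa> ^ Suc t * Cov U Ob (gibbs \<beta> H)"
    by (simp add: Cov_eq_kms[OF Mhat] A_def flip: kms_norm_power2) (simp add: power2_eq_square)
  finally show ?thesis .
qed

end


section \<open>The autocorrelation time\<close>

lemma weighted_sum_le_geometric_series:
  fixes c :: "nat \<Rightarrow> real"
  assumes c_le: "\<And>t. c t \<le> \<kappa> ^ Suc t * p" and "0 \<le> \<kappa>" and "\<kappa> < 1" and "0 \<le> p" and "1 \<le> K"
  shows "(\<Sum>t=1..K. (1 - real t / real K) * c (t - 1)) \<le> p / (1 - \<kappa>)"
proof -
  have "(1 - real t / real K) * c (t - 1) \<le> \<kappa> ^ t * p" if "t \<in> {1..K}" for t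
  proof -
    have "0 \<le> 1 - real t / real K" and "1 - real t / real K \<le> 1"
      using that \<open>1 \<le> K\<close> by auto
    moreover have "c (t - 1) \<le> \<kappa> ^ t * p"
      using c_le[of "t - 1"] that by (cases t) simp_all
    ultimately have "(1 - real t / real K) * c (t - 1) \<le> (1 - real t / real K) * (\<kappa> ^ t * p)"
      by (intro mult_left_mono)
    also have "\<dots> \<le> \<kappa> ^ t * p"
      using \<open>0 \<le> 1 - real t / real K\<close> \<open>1 - real t / real K \<le> 1\<close> \<open>0 \<le> \<kappa>\<close> \<open>0 \<le> p\<close>
      by (intro mult_left_le_one_le) simp_all
    finally show ?thesis .
  qed
  then have "(\<Sum>t=1..K. (1 - real t / real K) * c (t - 1)) \<le> (\<Sum>t=1..K. \<kappa> ^ t * p)"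
    by (rule sum_mono)
  also have "\<dots> = p * (\<Sum>t=1..K. \<kappa> ^ t)"
    by (simp add: sum_distrib_left mult.commute)
  also have "\<dots> \<le> p * (1 / (1 - \<kappa>))"
  proof (rule mult_left_mono[OF _ \<open>0 \<le> p\<close>], cases "\<kappa> = 0")
    case False
    then show "(\<Sum>t=1..K. \<kappa> ^ t) \<le> 1 / (1 - \<kappa>)"
      using geometric_sum_less[of \<kappa> "{1..K}"] assms(2,3) by simp
  next
    case True
    then have "(\<Sum>t=1..K. \<kappa> ^ t) = 0"
      by (intro sum.neutral) auto
    then show "(\<Sum>t=1..K. \<kappa> ^ t) \<le> 1 / (1 - \<kappa>)"
      using True by simp
  qed
  finally show ?thesis
    by simp
qed

lemma t_aut_le:
  assumes Cor_le: "\<And>t. Cor \<beta> H I K U Ob t \<le> \<kappa> ^ Suc t * Cov U Ob (gibbs \<beta> H)"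
    and "0 \<le> Cov U Ob (gibbs \<beta> H)" and "0 < Var U Ob (gibbs \<beta> H)"
    and "0 \<le> \<kappa>" and "\<kappa> < 1" and "1 \<le> Kn"
  shows "t_aut \<beta> H I K U Ob Kn \<le> (Cov U Ob (gibbs \<beta> H) / Var U Ob (gibbs \<beta> H)) / (1 - \<kappa>) + 1/2"
proof -
  let ?V = "Var U Ob (gibbs \<beta> H)"
  have "Cor \<beta> H I K U Ob t / ?V \<le> \<kappa> ^ Suc t * (Cov U Ob (gibbs \<beta> H) / ?V)" for t
    using Cor_le[of t] \<open>0 < ?V\<close> by (simp add: divide_right_mono)
  then have "(\<Sum>t=1..Kn. (1 - real t / real Kn) * (Cor \<beta> H I K U Ob (t - 1) / ?V))
      \<le> (Cov U Ob (gibbs \<beta> H) / ?V) / (1 - \<kappa>)"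
    using assms(2-6) by (intro weighted_sum_le_geometric_series) auto
  then show ?thesis
    by (simp add: t_aut_def)
qed

theorem lemma5p6:
  fixes n :: nat and H :: "'d::finite cmat" and \<beta> s :: real
    and I :: "'a set" and K :: "'a \<Rightarrow> 'd cmat"
    and U :: "real set" and Ob :: "real \<Rightarrow> 'd cmat"
    and Kn :: nat
  assumes qubits: "CARD('d) = 2 ^ n" and n_pos: "n \<ge> 1"
    and herm: "hermitian H" and beta_pos: "\<beta> > 0"
    and N_channel: "is_channel I K" and M_channel: "is_channel U Ob"
    and N_db: "detailed_balance \<beta> H s (kraus_adj I K)"
    and M_db: "detailed_balance \<beta> H s (kraus_adj U Ob)"
    and N_fixed: "kraus I K (gibbs \<beta> H) = gibbs \<beta> H"
    and N_unique: "\<And>\<sigma>. density \<sigma> \<Longrightarrow> kraus I K \<sigma> = \<sigma> \<Longrightarrow> \<sigma> = gibbs \<beta> H"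
    and N_spec: "\<And>c X. X \<noteq> 0 \<Longrightarrow> kraus I K X = cscale c X \<Longrightarrow>
                   c \<in> \<real> \<and> 0 \<le> Re c \<and> Re c \<le> 1"
    and Mhat_db: "detailed_balance \<beta> H s (Mhat_adj \<beta> H U Ob)"
    and V_pos: "Var U Ob (gibbs \<beta> H) > 0"
    and K_pos: "Kn \<ge> 1"
  shows "t_aut \<beta> H I K U Ob Kn
           \<le> (Cov U Ob (gibbs \<beta> H) / Var U Ob (gibbs \<beta> H)) / gap \<beta> H s (kraus_adj I K) + 1/2"
proof -
  interpret hermitian_hamiltonian \<beta> H
    using herm by unfold_locales
  have "2 \<le> CARD('d)"
    using qubits n_pos power_increasing[of 1 n "2::nat"] by simp
  then have gap: "0 < gap \<beta> H s (kraus_adj I K)" "gap \<beta> H s (kraus_adj I K) \<le> 1"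
    and N_contraction: "\<And>X. kms s X (mat 1) = 0 \<Longrightarrow>
      kms_norm s (kraus_adj I K X) \<le> (1 - gap \<beta> H s (kraus_adj I K)) * kms_norm s X"
    using kraus_adj_spectral_gap[OF N_channel N_db N_fixed] N_unique N_spec by blast+
  have "Cor \<beta> H I K U Ob t \<le> (1 - gap \<beta> H s (kraus_adj I K)) ^ Suc t * Cov U Ob (gibbs \<beta> H)" for t
    using gap by (intro Cor_le_geometric[OF N_channel N_db M_channel M_db Mhat_db N_contraction]) auto
  moreover have "0 \<le> Cov U Ob (gibbs \<beta> H)"
    by (simp add: Cov_eq_kms[OF Mhat_db] kms_self_nonneg)
  ultimately have "t_aut \<beta> H I K U Ob Kn
      \<le> (Cov U Ob (gibbs \<beta> H) / Var U Ob (gibbs \<beta> H)) / (1 - (1 - gap \<beta> H s (kraus_adj I K))) + 1/2"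
    using gap V_pos K_pos by (intro t_aut_le) auto
  then show ?thesis
    by simp
qed

end
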